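(* Let $A$ be a finite dimensional algebra over an algebraically closed field $F$ of characteristic zero and let $P_1$, $P_2$ be presentations of $A$ by full algebras. Let $T_1\cong(T_1)_{ss}\oplus J_{T_1}$ be a full summand of $P_1$ and $T_2\cong(T_2)_{ss}\oplus J_{T_2}$ a full summand of $P_2$ with $(T_1)_{ss}\cong(T_2)_{ss}\cong U$. Let $T_1'=U\oplus J_{T_1}\oplus J_{T_2}$ be the fusion of $T_1$ and $T_2$, i.e. the subalgebra of $T_1\times T_2$ consisting of all pairs $(u+j_1,\varphi(u)+j_2)$ with $u\in(T_1)_{ss}$, $j_1\in J_{T_1}$, $j_2\in J_{T_2}$, where $\varphi:(T_1)_{ss}\to(T_2)_{ss}$ is a fixed isomorphism. Let $P_1'$ be the direct sum of full algebras obtained from $P_1$ by replacing the summand $T_1$ by $T_1'$. Then $P_1'$ is a presentation of $A$.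
   Context: For a finite dimensional algebra $T$ with Wedderburn–Malcev decomposition $T\cong T'_1\times\cdots\times T'_q\oplus J_T$, $T$ is full if, up to permuting simple components, $T'_1J_TT'_2\cdots J_TT'_q\neq0$. A presentation of $A$ by full algebras is a direct sum $T_1\oplus\cdots\oplus T_n$ of full algebras (with this decomposition fixed) which is PI-equivalent to $A$, i.e. has the same $T$-ideal of polynomial identities. *)

theory Defs
  imports "HOL-Computational_Algebra.Polynomial"
begin

record ('f, 'a) alg =
  acarrier :: "'a set"
  azero :: 'a
  aadd :: "'a \<Rightarrow> 'a \<Rightarrow> 'a"
  amul :: "'a \<Rightarrow> 'a \<Rightarrow> 'a"
  asmult :: "'f \<Rightarrow> 'a \<Rightarrow> 'a"

definition algebra :: "('f::field, 'a) alg \<Rightarrow> bool" where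
  "algebra A \<longleftrightarrow>
     azero A \<in> acarrier A \<and>
     (\<forall>x\<in>acarrier A. \<forall>y\<in>acarrier A. aadd A x y \<in> acarrier A \<and> amul A x y \<in> acarrier A) \<and>
     (\<forall>c. \<forall>x\<in>acarrier A. asmult A c x \<in> acarrier A) \<and>
     (\<forall>x\<in>acarrier A. \<forall>y\<in>acarrier A. \<forall>z\<in>acarrier A.
        aadd A (aadd A x y) z = aadd A x (aadd A y z) \<and>
        amul A (amul A x y) z = amul A x (amul A y z) \<and>
        amul A x (aadd A y z) = aadd A (amul A x y) (amul A x z) \<and>
        amul A (aadd A x y) z = aadd A (amul A x z) (amul A y z)) \<and>
     (\<forall>x\<in>acarrier A. \<forall>y\<in>acarrier A. aadd A x y = aadd A y x) \<and>
     (\<forall>x\<in>acarrier A. aadd A (azero A) x = x) \<and>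
     (\<forall>x\<in>acarrier A. \<exists>y\<in>acarrier A. aadd A x y = azero A) \<and>
     (\<forall>c d. \<forall>x\<in>acarrier A. \<forall>y\<in>acarrier A.
        asmult A c (aadd A x y) = aadd A (asmult A c x) (asmult A c y) \<and>
        asmult A (c + d) x = aadd A (asmult A c x) (asmult A d x) \<and>
        asmult A (c * d) x = asmult A c (asmult A d x) \<and>
        asmult A c (amul A x y) = amul A (asmult A c x) y \<and>
        asmult A c (amul A x y) = amul A x (asmult A c y)) \<and>
     (\<forall>x\<in>acarrier A. asmult A 1 x = x)"

definition lsum :: "('f, 'a) alg \<Rightarrow> 'a list \<Rightarrow> 'a" where
  "lsum A xs = foldr (aadd A) xs (azero A)"

fun lprod :: "('f, 'a) alg \<Rightarrow> 'a list \<Rightarrow> 'a" where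
  "lprod A [] = azero A"
| "lprod A [x] = x"
| "lprod A (x # y # zs) = amul A x (lprod A (y # zs))"

definition fin_dim :: "('f::field, 'a) alg \<Rightarrow> bool" where
  "fin_dim A \<longleftrightarrow> (\<exists>bs. set bs \<subseteq> acarrier A \<and>
     (\<forall>x\<in>acarrier A. \<exists>cs. length cs = length bs \<and> x = lsum A (map2 (asmult A) cs bs)))"

definition subalgebra :: "('f, 'a) alg \<Rightarrow> 'a set \<Rightarrow> bool" where
  "subalgebra A S \<longleftrightarrow> S \<subseteq> acarrier A \<and> azero A \<in> S \<and>
     (\<forall>x\<in>S. \<forall>y\<in>S. aadd A x y \<in> S \<and> amul A x y \<in> S) \<and>
     (\<forall>c. \<forall>x\<in>S. asmult A c x \<in> S)"

definition sub :: "('f, 'a) alg \<Rightarrow> 'a set \<Rightarrow> ('f, 'a) alg" where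
  "sub A S = A\<lparr>acarrier := S\<rparr>"

definition alg_ideal :: "('f, 'a) alg \<Rightarrow> 'a set \<Rightarrow> bool" where
  "alg_ideal A I \<longleftrightarrow> subalgebra A I \<and>
     (\<forall>x\<in>acarrier A. \<forall>y\<in>I. amul A x y \<in> I \<and> amul A y x \<in> I)"

definition nilpotent_set :: "('f, 'a) alg \<Rightarrow> 'a set \<Rightarrow> bool" where
  "nilpotent_set A I \<longleftrightarrow> (\<exists>m>0. \<forall>xs. length xs = m \<longrightarrow> set xs \<subseteq> I \<longrightarrow> lprod A xs = azero A)"

text \<open>Jacobson radical of a finite dimensional algebra: the largest nilpotent ideal
  (the union of all nilpotent ideals, which is itself a nilpotent ideal in finite dimension).\<close>
definition rad :: "('f, 'a) alg \<Rightarrow> 'a set" where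
  "rad A = \<Union>{I. alg_ideal A I \<and> nilpotent_set A I}"

definition simple_alg :: "('f, 'a) alg \<Rightarrow> bool" where
  "simple_alg A \<longleftrightarrow> (\<exists>x\<in>acarrier A. \<exists>y\<in>acarrier A. amul A x y \<noteq> azero A) \<and>
     (\<forall>I. alg_ideal A I \<longrightarrow> I = {azero A} \<or> I = acarrier A)"

text \<open>Wedderburn--Malcev decomposition T = (T'_1 x ... x T'_q) (+) J_T, given by the list of
  simple components T'_i (subalgebras of T, mutually orthogonal), such that T is the vector space
  direct sum of the T'_i and the radical.\<close>
definition wm_decomp :: "('f::field, 'a) alg \<Rightarrow> 'a set list \<Rightarrow> bool" where
  "wm_decomp T Ts \<longleftrightarrow>
     (\<forall>S\<in>set Ts. subalgebra T S \<and> simple_alg (sub T S)) \<and>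
     (\<forall>i<length Ts. \<forall>j<length Ts. i \<noteq> j \<longrightarrow>
        (\<forall>x\<in>Ts!i. \<forall>y\<in>Ts!j. amul T x y = azero T)) \<and>
     (\<forall>x\<in>acarrier T. \<exists>bs j. length bs = length Ts \<and> (\<forall>i<length Ts. bs!i \<in> Ts!i) \<and>
        j \<in> rad T \<and> x = aadd T (lsum T bs) j) \<and>
     (\<forall>bs j. length bs = length Ts \<and> (\<forall>i<length Ts. bs!i \<in> Ts!i) \<and> j \<in> rad T \<and>
        aadd T (lsum T bs) j = azero T \<longrightarrow> (\<forall>i<length Ts. bs!i = azero T) \<and> j = azero T)"

definition ss_part :: "('f, 'a) alg \<Rightarrow> 'a set list \<Rightarrow> 'a set" where
  "ss_part T Ts = {lsum T bs | bs. length bs = length Ts \<and> (\<forall>i<length Ts. bs!i \<in> Ts!i)}"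

fun alternate :: "'a list \<Rightarrow> 'a list \<Rightarrow> 'a list" where
  "alternate [t] [] = [t]"
| "alternate (t # ts) (j # js) = t # j # alternate ts js"
| "alternate _ _ = []"

text \<open>Full algebra: some ordering T'_1,...,T'_q of the simple components of a WM decomposition
  with T'_1 J T'_2 J ... J T'_q \<noteq> 0, i.e. some product t_1 j_1 t_2 ... j_{q-1} t_q \<noteq> 0.\<close>
definition full :: "('f::field, 'a) alg \<Rightarrow> bool" where
  "full T \<longleftrightarrow> algebra T \<and> fin_dim T \<and>
     (\<exists>Ts. wm_decomp T Ts \<and> Ts \<noteq> [] \<and>
        (\<exists>ts js. length ts = length Ts \<and> length js + 1 = length Ts \<and>
           (\<forall>i<length Ts. ts!i \<in> Ts!i) \<and> set js \<subseteq> rad T \<and>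
           lprod T (alternate ts js) \<noteq> azero T))"

text \<open>Noncommutative polynomials without constant term in variables x_0, x_1, ...:
  lists of (coefficient, monomial), a monomial being a nonempty word of variable indices.\<close>
type_synonym 'f ncpoly = "('f \<times> nat list) list"

definition eval_nc :: "('f, 'a) alg \<Rightarrow> 'f ncpoly \<Rightarrow> (nat \<Rightarrow> 'a) \<Rightarrow> 'a" where
  "eval_nc A f s = lsum A (map (\<lambda>(c, w). asmult A c (lprod A (map s w))) f)"

definition is_identity :: "('f, 'a) alg \<Rightarrow> 'f ncpoly \<Rightarrow> bool" where
  "is_identity A f \<longleftrightarrow> (\<forall>(c, w)\<in>set f. w \<noteq> []) \<and>
     (\<forall>s. (\<forall>i. s i \<in> acarrier A) \<longrightarrow> eval_nc A f s = azero A)"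

definition pi_equiv :: "('f, 'a) alg \<Rightarrow> ('f, 'b) alg \<Rightarrow> bool" where
  "pi_equiv A B \<longleftrightarrow> (\<forall>f. is_identity A f = is_identity B f)"

definition dsum :: "(nat \<Rightarrow> ('f, 'a) alg) \<Rightarrow> nat \<Rightarrow> ('f, nat \<Rightarrow> 'a) alg" where
  "dsum T n = \<lparr> acarrier = {g. (\<forall>i<n. g i \<in> acarrier (T i)) \<and> (\<forall>i\<ge>n. g i = undefined)},
     azero = (\<lambda>i. if i < n then azero (T i) else undefined),
     aadd = (\<lambda>g h i. if i < n then aadd (T i) (g i) (h i) else undefined),
     amul = (\<lambda>g h i. if i < n then amul (T i) (g i) (h i) else undefined),
     asmult = (\<lambda>c g i. if i < n then asmult (T i) c (g i) else undefined) \<rparr>"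

definition presentation :: "('f::field, 'a) alg \<Rightarrow> (nat \<Rightarrow> ('f, 'b) alg) \<Rightarrow> nat \<Rightarrow> bool" where
  "presentation A T n \<longleftrightarrow> (\<forall>i<n. full (T i)) \<and> pi_equiv A (dsum T n)"

definition prod_alg :: "('f, 'a) alg \<Rightarrow> ('f, 'b) alg \<Rightarrow> ('f, 'a \<times> 'b) alg" where
  "prod_alg A B = \<lparr> acarrier = acarrier A \<times> acarrier B,
     azero = (azero A, azero B),
     aadd = (\<lambda>(x1, y1) (x2, y2). (aadd A x1 x2, aadd B y1 y2)),
     amul = (\<lambda>(x1, y1) (x2, y2). (amul A x1 x2, amul B y1 y2)),
     asmult = (\<lambda>c (x, y). (asmult A c x, asmult B c y)) \<rparr>"

definition alg_iso :: "('f, 'a) alg \<Rightarrow> ('f, 'b) alg \<Rightarrow> ('a \<Rightarrow> 'b) \<Rightarrow> bool" where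
  "alg_iso A B h \<longleftrightarrow> bij_betw h (acarrier A) (acarrier B) \<and> h (azero A) = azero B \<and>
     (\<forall>x\<in>acarrier A. \<forall>y\<in>acarrier A. h (aadd A x y) = aadd B (h x) (h y) \<and>
        h (amul A x y) = amul B (h x) (h y)) \<and>
     (\<forall>c. \<forall>x\<in>acarrier A. h (asmult A c x) = asmult B c (h x))"

definition fusion :: "('f, 'a) alg \<Rightarrow> ('f, 'b) alg \<Rightarrow> 'a set \<Rightarrow> ('a \<Rightarrow> 'b) \<Rightarrow> ('f, 'a \<times> 'b) alg" where
  "fusion T1 T2 B1 \<phi> = (prod_alg T1 T2)\<lparr>acarrier :=
     {(aadd T1 u j1, aadd T2 (\<phi> u) j2) | u j1 j2. u \<in> B1 \<and> j1 \<in> rad T1 \<and> j2 \<in> rad T2}\<rparr>"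

end

(*
  The fusion T1' is a subdirect product of T1 and T2: a subalgebra of T1 x T2 that projects onto
  both factors. Hence its identities are exactly the common identities of T1 and T2, and as T2 is
  a summand of a presentation of A, every identity of A is one of T2; so replacing T1 by T1' does
  not change the identities of the direct sum.

  For fullness, split x = u + j in T1 with u semisimple and j radical. The map u + j \<mapsto>
  (u + j, \<phi> u) embeds T1 into T1'; it reflects the radical, which is J1 x J2 in T1', and T1'
  is its image plus the radical. Such an embedding carries the Wedderburn--Malcev decomposition
  of T1 and a nonzero product t1 j1 t2 ... j(q-1) tq over to T1'.
*)

theory Submission
  imports Defs
begin

locale assoc_alg =
  fixes A :: "('f::field, 'a) alg"
  assumes is_algebra: "algebra A"
begin

abbreviation "C \<equiv> acarrier A"
abbreviation "z \<equiv> azero A"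
abbreviation "ad \<equiv> aadd A"
abbreviation "mu \<equiv> amul A"
abbreviation "sm \<equiv> asmult A"
abbreviation "neg x \<equiv> sm (-1) x"

lemma zero_closed [simp, intro]: "z \<in> C"
  and add_closed [simp, intro]: "x \<in> C \<Longrightarrow> y \<in> C \<Longrightarrow> ad x y \<in> C"
  and mul_closed [simp, intro]: "x \<in> C \<Longrightarrow> y \<in> C \<Longrightarrow> mu x y \<in> C"
  and sm_closed [simp, intro]: "x \<in> C \<Longrightarrow> sm c x \<in> C"
  using is_algebra by (simp_all add: algebra_def)

lemma add_assoc: "x \<in> C \<Longrightarrow> y \<in> C \<Longrightarrow> w \<in> C \<Longrightarrow> ad (ad x y) w = ad x (ad y w)"
  and mul_assoc: "x \<in> C \<Longrightarrow> y \<in> C \<Longrightarrow> w \<in> C \<Longrightarrow> mu (mu x y) w = mu x (mu y w)"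
  and distrib_left: "x \<in> C \<Longrightarrow> y \<in> C \<Longrightarrow> w \<in> C \<Longrightarrow> mu x (ad y w) = ad (mu x y) (mu x w)"
  and distrib_right: "x \<in> C \<Longrightarrow> y \<in> C \<Longrightarrow> w \<in> C \<Longrightarrow> mu (ad x y) w = ad (mu x w) (mu y w)"
  and add_comm: "x \<in> C \<Longrightarrow> y \<in> C \<Longrightarrow> ad x y = ad y x"
  and zero_add [simp]: "x \<in> C \<Longrightarrow> ad z x = x"
  and add_inverse_ex: "x \<in> C \<Longrightarrow> \<exists>y\<in>C. ad x y = z"
  and sm_add: "x \<in> C \<Longrightarrow> y \<in> C \<Longrightarrow> sm c (ad x y) = ad (sm c x) (sm c y)"
  and add_sm: "x \<in> C \<Longrightarrow> sm (c + d) x = ad (sm c x) (sm d x)"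
  and sm_sm: "x \<in> C \<Longrightarrow> sm (c * d) x = sm c (sm d x)"
  and sm_mul_left: "x \<in> C \<Longrightarrow> y \<in> C \<Longrightarrow> sm c (mu x y) = mu (sm c x) y"
  and sm_mul_right: "x \<in> C \<Longrightarrow> y \<in> C \<Longrightarrow> sm c (mu x y) = mu x (sm c y)"
  and sm_one [simp]: "x \<in> C \<Longrightarrow> sm 1 x = x"
  using is_algebra unfolding algebra_def by blast+

lemmas alg_simps = add_assoc mul_assoc distrib_left distrib_right sm_add add_sm sm_sm
  sm_mul_left[symmetric] sm_mul_right[symmetric]

lemma add_zero [simp]: "x \<in> C \<Longrightarrow> ad x z = x"
  using add_comm[of x z] by simp

lemma add_left_cancel:
  assumes "x \<in> C" "y \<in> C" "w \<in> C" and "ad x y = ad x w"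
  shows "y = w"
proof -
  obtain x' where x': "x' \<in> C" "ad x x' = z" using add_inverse_ex \<open>x \<in> C\<close> by blast
  then have "ad x' x = z" using add_comm \<open>x \<in> C\<close> by simp
  then show ?thesis
    using assms x' add_assoc[of x' x y] add_assoc[of x' x w] by simp
qed

lemma add_left_idem_zero: "x \<in> C \<Longrightarrow> y \<in> C \<Longrightarrow> ad y x = y \<Longrightarrow> x = z"
  using add_left_cancel[of y x z] by simp

lemma sm_zero_left [simp]: "x \<in> C \<Longrightarrow> sm 0 x = z"
  using add_sm[of x 0 0] add_left_idem_zero[of "sm 0 x" "sm 0 x"] by simp

lemma sm_zero_right [simp]: "sm c z = z"
  using sm_add[of z z c] add_left_idem_zero[of "sm c z" "sm c z"] by simp

lemma mul_zero_right [simp]: "x \<in> C \<Longrightarrow> mu x z = z"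
  using distrib_left[of x z z] add_left_idem_zero[of "mu x z" "mu x z"] by simp

lemma mul_zero_left [simp]: "x \<in> C \<Longrightarrow> mu z x = z"
  using distrib_right[of z z x] add_left_idem_zero[of "mu z x" "mu z x"] by simp

lemma add_neg [simp]: "x \<in> C \<Longrightarrow> ad x (neg x) = z"
  using add_sm[of x 1 "-1"] by simp

lemma eq_add_neg: "a \<in> C \<Longrightarrow> b \<in> C \<Longrightarrow> ad a b = c \<Longrightarrow> a = ad c (neg b)"
  using add_assoc[of a b "neg b"] by simp

lemma add_left_commute: "x \<in> C \<Longrightarrow> y \<in> C \<Longrightarrow> w \<in> C \<Longrightarrow> ad x (ad y w) = ad y (ad x w)"
  by (metis add_assoc add_comm)

lemmas add_ac = add_assoc add_comm add_left_commute

lemma add_add_swap: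
  "a \<in> C \<Longrightarrow> b \<in> C \<Longrightarrow> c \<in> C \<Longrightarrow> d \<in> C \<Longrightarrow> ad (ad a b) (ad c d) = ad (ad a c) (ad b d)"
  using add_assoc add_comm by (metis add_closed)

end

lemma lsum_Nil [simp]: "lsum A [] = azero A"
  and lsum_Cons [simp]: "lsum A (x # xs) = aadd A x (lsum A xs)"
  by (simp_all add: lsum_def)

lemma lprod_Cons: "ys \<noteq> [] \<Longrightarrow> lprod A (x # ys) = amul A x (lprod A ys)"
  by (cases ys) auto

context assoc_alg
begin

lemma lsum_closed [simp, intro]: "set xs \<subseteq> C \<Longrightarrow> lsum A xs \<in> C"
  by (induction xs) auto

lemma lsum_append: "set xs \<subseteq> C \<Longrightarrow> set ys \<subseteq> C \<Longrightarrow> lsum A (xs @ ys) = ad (lsum A xs) (lsum A ys)"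
  by (induction xs) (auto simp: add_assoc)

lemma lsum_zeros: "\<forall>x\<in>set xs. x = z \<Longrightarrow> lsum A xs = z"
  by (induction xs) auto

lemma lsum_map2_add:
  "length xs = length ys \<Longrightarrow> set xs \<subseteq> C \<Longrightarrow> set ys \<subseteq> C \<Longrightarrow>
    lsum A (map2 ad xs ys) = ad (lsum A xs) (lsum A ys)"
proof (induction xs arbitrary: ys)
  case (Cons x xs)
  then show ?case by (cases ys) (auto simp: add_add_swap)
qed simp

lemma sm_lsum: "set xs \<subseteq> C \<Longrightarrow> sm c (lsum A xs) = lsum A (map (sm c) xs)"
  by (induction xs) (auto simp: sm_add)

lemma mul_lsum: "x \<in> C \<Longrightarrow> set ys \<subseteq> C \<Longrightarrow> mu x (lsum A ys) = lsum A (map (mu x) ys)"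
  by (induction ys) (auto simp: distrib_left)

lemma lsum_mul: "y \<in> C \<Longrightarrow> set xs \<subseteq> C \<Longrightarrow> mu (lsum A xs) y = lsum A (map (\<lambda>x. mu x y) xs)"
  by (induction xs) (auto simp: distrib_right)

lemma lsum_single:
  "set xs \<subseteq> C \<Longrightarrow> j < length xs \<Longrightarrow> \<forall>i<length xs. i \<noteq> j \<longrightarrow> xs ! i = z \<Longrightarrow> lsum A xs = xs ! j"
proof (induction xs arbitrary: j)
  case (Cons x xs)
  show ?case
  proof (cases j)
    case 0
    have "\<forall>y\<in>set xs. y = z"
    proof
      fix y assume "y \<in> set xs"
      then obtain k where "k < length xs" "y = xs ! k" by (auto simp: in_set_conv_nth)
      then show "y = z" using Cons.prems(3) 0 by (metis Suc_less_eq length_Cons nat.distinct(1) nth_Cons_Suc)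
    qed
    with 0 Cons.prems show ?thesis by (simp add: lsum_zeros)
  next
    case (Suc k)
    with Cons.prems have "x = z" and "lsum A xs = xs ! k" and "xs ! k \<in> C"
      by (auto intro!: Cons.IH)
    with Suc show ?thesis by simp
  qed
qed simp

lemma lprod_closed_subset:
  "xs \<noteq> [] \<Longrightarrow> set xs \<subseteq> S \<Longrightarrow> \<forall>x\<in>S. \<forall>y\<in>S. mu x y \<in> S \<Longrightarrow> lprod A xs \<in> S"
proof (induction xs)
  case (Cons x xs)
  then show ?case by (cases "xs = []") (auto simp: lprod_Cons)
qed simp

lemma lprod_closed [simp, intro]: "set xs \<subseteq> C \<Longrightarrow> lprod A xs \<in> C"
  by (cases "xs = []") (auto intro: lprod_closed_subset)

lemma lprod_append:
  "xs \<noteq> [] \<Longrightarrow> ys \<noteq> [] \<Longrightarrow> set xs \<subseteq> C \<Longrightarrow> set ys \<subseteq> C \<Longrightarrow>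
    lprod A (xs @ ys) = mu (lprod A xs) (lprod A ys)"
proof (induction xs)
  case (Cons x xs)
  then show ?case by (cases "xs = []") (simp_all add: lprod_Cons mul_assoc)
qed simp

end

lemma map_alternate: "map f (alternate xs ys) = alternate (map f xs) (map f ys)"
  by (induction xs ys rule: alternate.induct) auto

lemma set_alternate: "set (alternate xs ys) \<subseteq> set xs \<union> set ys"
  by (induction xs ys rule: alternate.induct) auto

lemma sub_simps [simp]:
  "acarrier (sub A S) = S" "azero (sub A S) = azero A" "aadd (sub A S) = aadd A"
  "amul (sub A S) = amul A" "asmult (sub A S) = asmult A"
  by (simp_all add: sub_def)

lemma algebra_sub:
  assumes A: "algebra A" and S: "subalgebra A S"
  shows "algebra (sub A S)"
proof -
  interpret assoc_alg A by (rule assoc_alg.intro[OF A])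
  have "S \<subseteq> C" using S by (simp add: subalgebra_def)
  with S show ?thesis
    unfolding algebra_def sub_simps subalgebra_def
    by (auto simp: subset_iff alg_simps) (metis add_comm, metis add_neg)
qed

lemma prod_alg_simps [simp]:
  "acarrier (prod_alg A B) = acarrier A \<times> acarrier B"
  "azero (prod_alg A B) = (azero A, azero B)"
  "aadd (prod_alg A B) (a, b) (c, d) = (aadd A a c, aadd B b d)"
  "amul (prod_alg A B) (a, b) (c, d) = (amul A a c, amul B b d)"
  "asmult (prod_alg A B) k (a, b) = (asmult A k a, asmult B k b)"
  by (simp_all add: prod_alg_def)

lemma algebra_prod_alg:
  assumes "algebra A" and "algebra B"
  shows "algebra (prod_alg A B)"
proof -
  interpret A: assoc_alg A by (rule assoc_alg.intro) fact
  interpret B: assoc_alg B by (rule assoc_alg.intro) fact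
  show ?thesis
    unfolding algebra_def prod_alg_simps(1)
    by (intro conjI ballI allI; clarsimp simp: A.alg_simps B.alg_simps)
      (use A.add_comm B.add_comm in blast, use A.add_neg B.add_neg A.sm_closed B.sm_closed in blast)
qed

section \<open>Homomorphisms and polynomial identities\<close>

definition alg_hom :: "('f, 'a) alg \<Rightarrow> ('f, 'b) alg \<Rightarrow> ('a \<Rightarrow> 'b) \<Rightarrow> bool" where
  "alg_hom A B h \<longleftrightarrow> h (azero A) = azero B \<and>
     (\<forall>x\<in>acarrier A. \<forall>y\<in>acarrier A.
        h (aadd A x y) = aadd B (h x) (h y) \<and> h (amul A x y) = amul B (h x) (h y)) \<and>
     (\<forall>c. \<forall>x\<in>acarrier A. h (asmult A c x) = asmult B c (h x))"

lemma alg_homD: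
  assumes "alg_hom A B h"
  shows "h (azero A) = azero B"
    and "x \<in> acarrier A \<Longrightarrow> y \<in> acarrier A \<Longrightarrow> h (aadd A x y) = aadd B (h x) (h y)"
    and "x \<in> acarrier A \<Longrightarrow> y \<in> acarrier A \<Longrightarrow> h (amul A x y) = amul B (h x) (h y)"
    and "x \<in> acarrier A \<Longrightarrow> h (asmult A c x) = asmult B c (h x)"
  using assms by (simp_all add: alg_hom_def)

lemma algebra_hom_image:
  assumes A: "algebra A" and h: "alg_hom A B h" and img: "acarrier B = h ` acarrier A"
  shows "algebra B"
proof -
  interpret assoc_alg A by (rule assoc_alg.intro[OF A])
  note hom = alg_homD[OF h, symmetric]
  show ?thesis
    unfolding algebra_def img
    by (auto simp: hom alg_simps) (metis add_comm, metis add_neg sm_closed)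
qed

text \<open>Unlike \<open>alg_hom\<close>, no carrier side conditions: the projections out of products and direct
  sums are total homomorphisms.\<close>

definition total_hom :: "('f, 'a) alg \<Rightarrow> ('f, 'b) alg \<Rightarrow> ('a \<Rightarrow> 'b) \<Rightarrow> bool" where
  "total_hom A B h \<longleftrightarrow> h (azero A) = azero B \<and> (\<forall>x y. h (aadd A x y) = aadd B (h x) (h y)) \<and>
     (\<forall>x y. h (amul A x y) = amul B (h x) (h y)) \<and> (\<forall>c x. h (asmult A c x) = asmult B c (h x))"

lemma total_hom_imp_alg_hom: "total_hom A B h \<Longrightarrow> alg_hom A B h"
  by (simp add: total_hom_def alg_hom_def)

lemma total_hom_lsum: "total_hom A B h \<Longrightarrow> h (lsum A xs) = lsum B (map h xs)"
  by (induction xs) (auto simp: total_hom_def)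

lemma total_hom_lprod: "total_hom A B h \<Longrightarrow> h (lprod A xs) = lprod B (map h xs)"
  by (induction A xs rule: lprod.induct) (auto simp: total_hom_def)

lemma total_hom_eval_nc:
  assumes h: "total_hom A B h"
  shows "h (eval_nc A f s) = eval_nc B f (h \<circ> s)"
proof -
  have "h (asmult A c x) = asmult B c (h x)" for c x
    using h by (simp add: total_hom_def)
  then show ?thesis
    unfolding eval_nc_def total_hom_lsum[OF h]
    by (induction f) (auto simp: total_hom_lprod[OF h] comp_def)
qed

lemma total_hom_fst: "total_hom (prod_alg A B) A fst"
  and total_hom_snd: "total_hom (prod_alg A B) B snd"
  by (simp_all add: total_hom_def prod_alg_def split_def)

lemma total_hom_sub: "total_hom A B h \<Longrightarrow> total_hom (sub A S) B h"
  by (simp add: total_hom_def)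

context assoc_alg
begin

lemma alg_hom_lsum: "alg_hom A B h \<Longrightarrow> set xs \<subseteq> C \<Longrightarrow> h (lsum A xs) = lsum B (map h xs)"
  by (induction xs) (auto simp: alg_hom_def)

lemma alg_hom_lprod: "alg_hom A B h \<Longrightarrow> set xs \<subseteq> C \<Longrightarrow> h (lprod A xs) = lprod B (map h xs)"
proof (induction xs)
  case (Cons x xs)
  then show ?case by (cases "xs = []") (auto simp: lprod_Cons alg_hom_def)
qed (simp add: alg_hom_def)

lemma alg_hom_eval_nc:
  assumes h: "alg_hom A B h" and s: "\<forall>i. s i \<in> C"
  shows "h (eval_nc A f s) = eval_nc B f (h \<circ> s)"
proof -
  have "h (sm c (lprod A (map s w))) = asmult B c (lprod B (map (h \<circ> s) w))" for c w
    using s by (simp add: alg_homD(4)[OF h] alg_hom_lprod[OF h] image_subset_iff)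
  then have terms: "map h (map (\<lambda>(c, w). sm c (lprod A (map s w))) f) =
      map (\<lambda>(c, w). asmult B c (lprod B (map (h \<circ> s) w))) f"
    by (induction f) auto
  have closed: "set (map (\<lambda>(c, w). sm c (lprod A (map s w))) f) \<subseteq> C"
    using s by (auto simp: image_subset_iff)
  show ?thesis
    unfolding eval_nc_def alg_hom_lsum[OF h closed] terms ..
qed

lemma is_identity_hom_image:
  assumes h: "alg_hom A B h" and surj: "acarrier B \<subseteq> h ` C" and f: "is_identity A f"
  shows "is_identity B f"
  unfolding is_identity_def
proof (intro conjI allI impI)
  show "\<forall>(c, w)\<in>set f. w \<noteq> []" using f by (simp add: is_identity_def)
  fix s :: "nat \<Rightarrow> 'b" assume s: "\<forall>i. s i \<in> acarrier B"
  then have s_img: "s i \<in> h ` C" for i using surj by blast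
  define s' where "s' i = inv_into C h (s i)" for i :: nat
  have s': "\<forall>i. s' i \<in> C" and hs': "h \<circ> s' = s"
    using s_img by (auto simp: s'_def inv_into_into f_inv_into_f)
  have "eval_nc B f s = h (eval_nc A f s')" using alg_hom_eval_nc[OF h s'] hs' by simp
  also have "eval_nc A f s' = z" using f s' by (simp add: is_identity_def)
  finally show "eval_nc B f s = azero B" using alg_homD(1)[OF h] by simp
qed

end

lemma alg_iso_imp_alg_hom: "alg_iso A B h \<Longrightarrow> alg_hom A B h"
  by (simp add: alg_iso_def alg_hom_def)

lemma alg_iso_carrier: "alg_iso A B h \<Longrightarrow> acarrier B = h ` acarrier A"
  and alg_iso_inj_on: "alg_iso A B h \<Longrightarrow> inj_on h (acarrier A)"
  by (simp_all add: alg_iso_def bij_betw_def)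

lemma algebra_alg_iso: "algebra A \<Longrightarrow> alg_iso A B h \<Longrightarrow> algebra B"
  using algebra_hom_image alg_iso_imp_alg_hom alg_iso_carrier by blast

lemma alg_iso_inv:
  assumes A: "algebra A" and iso: "alg_iso A B h"
  shows "alg_iso B A (inv_into (acarrier A) h)"
proof -
  interpret assoc_alg A by (rule assoc_alg.intro[OF A])
  note hom = alg_homD[OF alg_iso_imp_alg_hom[OF iso]]
  have inv: "inv_into C h (h x) = x" if "x \<in> C" for x
    using that alg_iso_inj_on[OF iso] by simp
  have carrier: "acarrier B = h ` C" by (rule alg_iso_carrier[OF iso])
  show ?thesis
    unfolding alg_iso_def
  proof (intro conjI ballI allI)
    show "bij_betw (inv_into C h) (acarrier B) C"
      using iso by (simp add: alg_iso_def bij_betw_inv_into)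
    show "inv_into C h (azero B) = z"
      using inv[of z] hom(1) by simp
  next
    fix y1 y2 assume "y1 \<in> acarrier B" "y2 \<in> acarrier B"
    then obtain x1 x2 where "x1 \<in> C" "x2 \<in> C" "y1 = h x1" "y2 = h x2"
      using carrier by auto
    then show "inv_into C h (aadd B y1 y2) = ad (inv_into C h y1) (inv_into C h y2)"
      and "inv_into C h (amul B y1 y2) = mu (inv_into C h y1) (inv_into C h y2)"
      by (simp_all add: inv flip: hom(2,3))
  next
    fix c y assume "y \<in> acarrier B"
    then obtain x where "x \<in> C" "y = h x" using carrier by auto
    then show "inv_into C h (asmult B c y) = sm c (inv_into C h y)"
      by (simp add: inv flip: hom(4))
  qed
qed

lemma is_identity_alg_iso:
  assumes A: "algebra A" and iso: "alg_iso A B h"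
  shows "is_identity B f \<longleftrightarrow> is_identity A f"
proof -
  interpret A: assoc_alg A by (rule assoc_alg.intro[OF A])
  interpret B: assoc_alg B by (rule assoc_alg.intro[OF algebra_alg_iso[OF A iso]])
  have inv: "alg_iso B A (inv_into A.C h)" by (rule alg_iso_inv[OF A iso])
  have "acarrier B \<subseteq> h ` A.C" and "A.C \<subseteq> inv_into A.C h ` acarrier B"
    using alg_iso_carrier[OF iso] alg_iso_carrier[OF inv] by simp_all
  then show ?thesis
    using A.is_identity_hom_image[OF alg_iso_imp_alg_hom[OF iso]]
      B.is_identity_hom_image[OF alg_iso_imp_alg_hom[OF inv]] by blast
qed

section \<open>Ideals and the radical\<close>

context assoc_alg
begin

lemma ideal_subset: "alg_ideal A I \<Longrightarrow> I \<subseteq> C"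
  by (simp add: alg_ideal_def subalgebra_def)

lemma ideal_closed:
  assumes "alg_ideal A I"
  shows "z \<in> I" and "x \<in> I \<Longrightarrow> y \<in> I \<Longrightarrow> ad x y \<in> I" and "x \<in> I \<Longrightarrow> sm c x \<in> I"
    and "x \<in> C \<Longrightarrow> y \<in> I \<Longrightarrow> mu x y \<in> I" and "x \<in> C \<Longrightarrow> y \<in> I \<Longrightarrow> mu y x \<in> I"
  using assms by (simp_all add: alg_ideal_def subalgebra_def)

lemma zero_in_rad [simp, intro]: "z \<in> rad A"
proof -
  have "lprod A xs = z" if "length xs = 1" "set xs \<subseteq> {z}" for xs
    using that by (cases xs) auto
  then have "alg_ideal A {z}" "nilpotent_set A {z}"
    by (auto simp: alg_ideal_def subalgebra_def nilpotent_set_def intro!: exI[of _ 1])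
  then show ?thesis by (auto simp: rad_def)
qed

lemma rad_subset: "rad A \<subseteq> C"
  unfolding rad_def using ideal_subset by blast

lemma rad_closed [simp]: "j \<in> rad A \<Longrightarrow> j \<in> C"
  using rad_subset by blast

lemma nilpotent_lprod_ge:
  assumes I: "I \<subseteq> C" and "nilpotent_set A I"
  obtains m where "m > 0" and "\<And>xs. m \<le> length xs \<Longrightarrow> set xs \<subseteq> I \<Longrightarrow> lprod A xs = z"
proof -
  obtain m where m: "m > 0" "\<And>xs. length xs = m \<Longrightarrow> set xs \<subseteq> I \<Longrightarrow> lprod A xs = z"
    using assms(2) by (auto simp: nilpotent_set_def)
  have "lprod A xs = z" if l: "m \<le> length xs" and xs: "set xs \<subseteq> I" for xs
  proof (cases "m = length xs")
    case False
    let ?k = "length xs - m"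
    have "lprod A (take ?k xs @ drop ?k xs) = mu (lprod A (take ?k xs)) (lprod A (drop ?k xs))"
      using False l m(1) xs I by (intro lprod_append) (auto dest!: in_set_takeD in_set_dropD)
    moreover have "lprod A (drop ?k xs) = z"
      using m(2)[of "drop ?k xs"] l xs set_drop_subset[of ?k xs] by auto
    moreover have "lprod A (take ?k xs) \<in> C"
      using xs I set_take_subset[of ?k xs] by (intro lprod_closed) blast
    ultimately show ?thesis by simp
  qed (use m xs in auto)
  with m(1) show ?thesis by (rule that)
qed

definition ideal_sum :: "'a set \<Rightarrow> 'a set \<Rightarrow> 'a set" where
  "ideal_sum I J = {ad a b | a b. a \<in> I \<and> b \<in> J}"

lemma ideal_sumI: "a \<in> I \<Longrightarrow> b \<in> J \<Longrightarrow> ad a b \<in> ideal_sum I J"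
  by (auto simp: ideal_sum_def)

lemma ideal_sumE:
  assumes "x \<in> ideal_sum I J"
  obtains a b where "x = ad a b" "a \<in> I" "b \<in> J"
  using assms by (auto simp: ideal_sum_def)

lemma alg_ideal_ideal_sum:
  assumes I: "alg_ideal A I" and J: "alg_ideal A J"
  shows "alg_ideal A (ideal_sum I J)"
proof -
  note IC = subsetD[OF ideal_subset[OF I]] and JC = subsetD[OF ideal_subset[OF J]]
  note I' = ideal_closed[OF I] and J' = ideal_closed[OF J]
  show ?thesis
    unfolding alg_ideal_def subalgebra_def
  proof (intro conjI ballI allI)
    show "ideal_sum I J \<subseteq> C" using IC JC by (auto elim: ideal_sumE)
    show "z \<in> ideal_sum I J" using ideal_sumI[OF I'(1) J'(1)] by simp
  next
    fix x y assume "x \<in> ideal_sum I J" "y \<in> ideal_sum I J"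
    then obtain a b a' b' where "x = ad a b" "y = ad a' b'" "a \<in> I" "b \<in> J" "a' \<in> I" "b' \<in> J"
      by (auto elim!: ideal_sumE)
    then show "ad x y \<in> ideal_sum I J" and "mu x y \<in> ideal_sum I J"
      using IC JC I' J' by (auto simp: add_add_swap distrib_right intro!: ideal_sumI)
  next
    fix c x assume "x \<in> ideal_sum I J"
    then show "sm c x \<in> ideal_sum I J"
      using IC JC I' J' by (auto simp: sm_add intro!: ideal_sumI elim!: ideal_sumE)
  next
    fix x y assume "x \<in> C" "y \<in> ideal_sum I J"
    then show "mu x y \<in> ideal_sum I J" and "mu y x \<in> ideal_sum I J"
      using IC JC I' J' by (auto simp: distrib_left distrib_right intro!: ideal_sumI elim!: ideal_sumE)
  qed
qed

lemma lprod_ideal_sum: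
  assumes I: "alg_ideal A I" and J: "alg_ideal A J"
    and "xs \<noteq> []" and "set xs \<subseteq> ideal_sum I J"
  shows "\<exists>as b. length as = length xs \<and> set as \<subseteq> I \<and> b \<in> J \<and> lprod A xs = ad (lprod A as) b"
  using assms(3,4)
proof (induction xs)
  case (Cons x xs)
  note IC = subsetD[OF ideal_subset[OF I]] and JC = subsetD[OF ideal_subset[OF J]]
  obtain a b where ab: "x = ad a b" "a \<in> I" "b \<in> J"
    using Cons.prems by (auto elim: ideal_sumE)
  show ?case
  proof (cases "xs = []")
    case True
    with ab show ?thesis by (intro exI[of _ "[a]"] exI[of _ b]) auto
  next
    case False
    with Cons obtain as c where as: "length as = length xs" "set as \<subseteq> I" "c \<in> J"
      and xs: "lprod A xs = ad (lprod A as) c"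
      by auto
    have "as \<noteq> []" using False as(1) by auto
    then have p: "lprod A as \<in> I"
      using as(2) ideal_closed(2,4)[OF I] IC by (intro lprod_closed_subset) auto
    have "lprod A (x # xs) = ad (mu a (lprod A as)) (ad (mu a c) (mu b (ad (lprod A as) c)))"
      using False ab p as(3) xs IC JC by (simp add: lprod_Cons alg_simps add_comm add_left_commute)
    moreover have "ad (mu a c) (mu b (ad (lprod A as) c)) \<in> J"
      using ab p as(3) IC JC ideal_closed[OF J] by simp
    moreover have "mu a (lprod A as) = lprod A (a # as)"
      using \<open>as \<noteq> []\<close> by (simp add: lprod_Cons)
    ultimately show ?thesis
      using ab as by (intro exI[of _ "a # as"]) auto
  qed
qed simp

lemma lprod_blocks:
  assumes K: "K \<subseteq> C" and m: "m > 0"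
    and block: "\<And>xs. length xs = m \<Longrightarrow> set xs \<subseteq> K \<Longrightarrow> lprod A xs \<in> J"
    and xs: "length xs = Suc k * m" "set xs \<subseteq> K"
  shows "\<exists>ys. length ys = Suc k \<and> set ys \<subseteq> J \<and> lprod A xs = lprod A ys"
  using xs
proof (induction k arbitrary: xs)
  case 0
  then show ?case using block by (intro exI[of _ "[lprod A xs]"]) auto
next
  case (Suc k)
  let ?u = "take m xs" and ?v = "drop m xs"
  have u: "length ?u = m" "set ?u \<subseteq> K" and v: "length ?v = Suc k * m" "set ?v \<subseteq> K"
    using Suc.prems by (auto dest: in_set_takeD in_set_dropD)
  obtain ys where ys: "length ys = Suc k" "set ys \<subseteq> J" "lprod A ?v = lprod A ys"
    using Suc.IH[OF v] by blast
  have ne: "?u \<noteq> []" "?v \<noteq> []" using u(1) v(1) m by auto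
  have "lprod A xs = lprod A (?u @ ?v)" by simp
  also have "\<dots> = mu (lprod A ?u) (lprod A ?v)"
    using u(2) v(2) K by (intro lprod_append[OF ne]) auto
  also have "\<dots> = lprod A (lprod A ?u # ys)"
    using ys by (cases ys) auto
  finally show ?case
    using ys block[OF u] by (intro exI[of _ "lprod A ?u # ys"]) auto
qed

text \<open>Products of \<open>m\<close> factors from \<open>I + J\<close> lie in \<open>J\<close> when \<open>I\<^sup>m = 0\<close>;
  hence products of \<open>n m\<close> factors vanish when \<open>J\<^sup>n = 0\<close>.\<close>

lemma nilpotent_ideal_sum:
  assumes I: "alg_ideal A I" "nilpotent_set A I" and J: "alg_ideal A J" "nilpotent_set A J"
  shows "nilpotent_set A (ideal_sum I J)"
proof -
  let ?K = "ideal_sum I J"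
  have KC: "?K \<subseteq> C" using ideal_subset[OF alg_ideal_ideal_sum[OF I(1) J(1)]] .
  obtain m where m: "m > 0" "\<And>xs. length xs = m \<Longrightarrow> set xs \<subseteq> I \<Longrightarrow> lprod A xs = z"
    using I(2) by (auto simp: nilpotent_set_def)
  obtain n where n: "n > 0" "\<And>xs. length xs = n \<Longrightarrow> set xs \<subseteq> J \<Longrightarrow> lprod A xs = z"
    using J(2) by (auto simp: nilpotent_set_def)
  have block: "lprod A xs \<in> J" if l: "length xs = m" and xs: "set xs \<subseteq> ?K" for xs
  proof -
    have "xs \<noteq> []" using l m(1) by auto
    then obtain as b where "length as = m" "set as \<subseteq> I" "b \<in> J" "lprod A xs = ad (lprod A as) b"
      using lprod_ideal_sum[OF I(1) J(1) _ xs] l by auto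
    with m(2) show ?thesis using subsetD[OF ideal_subset[OF J(1)]] by auto
  qed
  show ?thesis
    unfolding nilpotent_set_def
  proof (intro exI[of _ "n * m"] conjI allI impI)
    show "n * m > 0" using m n by simp
    fix xs assume "length xs = n * m" "set xs \<subseteq> ?K"
    then obtain ys where "length ys = n" "set ys \<subseteq> J" "lprod A xs = lprod A ys"
      using lprod_blocks[OF KC m(1) block, of xs "n - 1"] n(1) by auto
    with n(2) show "lprod A xs = z" by simp
  qed
qed

lemma rad_add:
  assumes "x \<in> rad A" and "y \<in> rad A"
  shows "ad x y \<in> rad A"
proof -
  obtain I J where "alg_ideal A I" "nilpotent_set A I" "x \<in> I"
    and "alg_ideal A J" "nilpotent_set A J" "y \<in> J"
    using assms unfolding rad_def by blast
  then show ?thesis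
    unfolding rad_def
    by (intro UnionI[of "ideal_sum I J"])
      (simp_all add: alg_ideal_ideal_sum nilpotent_ideal_sum ideal_sumI)
qed

lemma rad_sm: "x \<in> rad A \<Longrightarrow> sm c x \<in> rad A"
  unfolding rad_def alg_ideal_def subalgebra_def by blast

lemma rad_mul_left: "x \<in> C \<Longrightarrow> y \<in> rad A \<Longrightarrow> mu x y \<in> rad A"
  and rad_mul_right: "x \<in> C \<Longrightarrow> y \<in> rad A \<Longrightarrow> mu y x \<in> rad A"
  unfolding rad_def alg_ideal_def by blast+

lemma alg_ideal_hom_image:
  assumes h: "alg_hom A B h" and img: "acarrier B = h ` C" and I: "alg_ideal A I"
  shows "alg_ideal B (h ` I)"
proof -
  note hom = alg_homD[OF h, symmetric] and I' = ideal_closed[OF I]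
  have IC: "I \<subseteq> C" by (rule ideal_subset[OF I])
  then have [simp]: "x \<in> I \<Longrightarrow> x \<in> C" for x by blast
  show ?thesis
    unfolding alg_ideal_def subalgebra_def img
    using IC I'(1) by (auto simp: hom I' intro!: imageI)
qed

lemma nilpotent_set_hom_image:
  assumes h: "alg_hom A B h" and I: "I \<subseteq> C" "nilpotent_set A I"
  shows "nilpotent_set B (h ` I)"
proof -
  obtain m where m: "m > 0" "\<And>xs. length xs = m \<Longrightarrow> set xs \<subseteq> I \<Longrightarrow> lprod A xs = z"
    using I(2) by (auto simp: nilpotent_set_def)
  have "lprod B ys = azero B" if "length ys = m" "set ys \<subseteq> h ` I" for ys
  proof -
    have "ys \<in> map h ` lists I"
      using \<open>set ys \<subseteq> h ` I\<close> by (simp add: lists_image[symmetric] in_lists_conv_set subset_iff)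
    then obtain xs where "ys = map h xs" "set xs \<subseteq> I" by auto
    with that I(1) show ?thesis
      by (simp add: m(2) alg_homD(1)[OF h] flip: alg_hom_lprod[OF h])
  qed
  with m(1) show ?thesis by (auto simp: nilpotent_set_def)
qed

lemma rad_hom_image:
  assumes h: "alg_hom A B h" and img: "acarrier B = h ` C"
  shows "h ` rad A \<subseteq> rad B"
  unfolding rad_def
  using alg_ideal_hom_image[OF h img] nilpotent_set_hom_image[OF h] ideal_subset by blast

end

lemma rad_alg_iso:
  assumes A: "algebra A" and iso: "alg_iso A B h"
  shows "rad B = h ` rad A"
proof
  interpret A: assoc_alg A by (rule assoc_alg.intro[OF A])
  interpret B: assoc_alg B by (rule assoc_alg.intro[OF algebra_alg_iso[OF A iso]])
  have inv: "alg_iso B A (inv_into A.C h)" by (rule alg_iso_inv[OF A iso])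
  show "h ` rad A \<subseteq> rad B"
    by (rule A.rad_hom_image[OF alg_iso_imp_alg_hom[OF iso] alg_iso_carrier[OF iso]])
  have "inv_into A.C h ` rad B \<subseteq> rad A"
    by (rule B.rad_hom_image[OF alg_iso_imp_alg_hom[OF inv] alg_iso_carrier[OF inv]])
  moreover have "y = h (inv_into A.C h y)" if "y \<in> rad B" for y
    using that B.rad_subset alg_iso_carrier[OF iso] by (simp add: f_inv_into_f subset_iff)
  ultimately show "rad B \<subseteq> h ` rad A" by blast
qed

lemma simple_alg_iso:
  assumes A: "algebra A" and iso: "alg_iso A B h" and simple: "simple_alg A"
  shows "simple_alg B"
proof -
  interpret A: assoc_alg A by (rule assoc_alg.intro[OF A])
  interpret B: assoc_alg B by (rule assoc_alg.intro[OF algebra_alg_iso[OF A iso]])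
  let ?g = "inv_into A.C h"
  have inv: "alg_iso B A ?g" by (rule alg_iso_inv[OF A iso])
  note hom = alg_homD[OF alg_iso_imp_alg_hom[OF iso]]
  obtain x y where xy: "x \<in> A.C" "y \<in> A.C" "A.mu x y \<noteq> A.z"
    using simple by (auto simp: simple_alg_def)
  then have "B.mu (h x) (h y) \<noteq> B.z"
    using alg_iso_inj_on[OF iso] by (simp flip: hom(1,3) add: inj_on_eq_iff)
  moreover have "h x \<in> B.C" "h y \<in> B.C"
    using xy alg_iso_carrier[OF iso] by auto
  moreover have "I = {B.z} \<or> I = B.C" if I: "alg_ideal B I" for I
  proof -
    have "?g ` I = {A.z} \<or> ?g ` I = A.C"
      using simple B.alg_ideal_hom_image[OF alg_iso_imp_alg_hom[OF inv] alg_iso_carrier[OF inv] I]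
      by (simp add: simple_alg_def)
    moreover have "h ` ?g ` I = I"
      using B.ideal_subset[OF I] alg_iso_carrier[OF iso] by (force simp: image_image f_inv_into_f)
    ultimately show ?thesis
      using alg_iso_carrier[OF iso] hom(1) by auto
  qed
  ultimately show ?thesis by (auto simp: simple_alg_def)
qed

section \<open>Wedderburn--Malcev decompositions\<close>

context assoc_alg
begin

lemma wm_decompD:
  assumes "wm_decomp A Ts"
  shows wm_component_subalgebra: "S \<in> set Ts \<Longrightarrow> subalgebra A S"
    and wm_component_simple: "S \<in> set Ts \<Longrightarrow> simple_alg (sub A S)"
    and wm_orthogonal: "\<lbrakk>i < length Ts; j < length Ts; i \<noteq> j; x \<in> Ts ! i; y \<in> Ts ! j\<rbrakk> \<Longrightarrow> mu x y = z"
    and wm_spanning: "w \<in> C \<Longrightarrow> \<exists>bs r. length bs = length Ts \<and> (\<forall>i<length Ts. bs ! i \<in> Ts ! i) \<and>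
          r \<in> rad A \<and> w = ad (lsum A bs) r"
    and wm_independent: "\<lbrakk>length bs = length Ts; \<forall>i<length Ts. bs ! i \<in> Ts ! i; r \<in> rad A;
          ad (lsum A bs) r = z\<rbrakk> \<Longrightarrow> (\<forall>i<length Ts. bs ! i = z) \<and> r = z"
  using assms unfolding wm_decomp_def by blast+

lemma wm_component_nth_subalgebra:
  "wm_decomp A Ts \<Longrightarrow> i < length Ts \<Longrightarrow> subalgebra A (Ts ! i)"
  using wm_component_subalgebra by simp

lemma wm_component_carrier:
  assumes "wm_decomp A Ts" "i < length Ts" "x \<in> Ts ! i"
  shows "x \<in> C"
  using wm_component_nth_subalgebra[OF assms(1,2)] assms(3) unfolding subalgebra_def by blast

lemma wm_components_carrier:
  assumes "wm_decomp A Ts" "length bs = length Ts" "\<forall>i<length Ts. bs ! i \<in> Ts ! i"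
  shows "set bs \<subseteq> C"
  using assms wm_component_carrier by (auto simp: in_set_conv_nth)

lemma ss_partI:
  "length bs = length Ts \<Longrightarrow> \<forall>i<length Ts. bs ! i \<in> Ts ! i \<Longrightarrow> lsum A bs \<in> ss_part A Ts"
  by (auto simp: ss_part_def)

lemma ss_partE:
  assumes "u \<in> ss_part A Ts"
  obtains bs where "u = lsum A bs" "length bs = length Ts" "\<forall>i<length Ts. bs ! i \<in> Ts ! i"
  using assms by (auto simp: ss_part_def)

lemma ss_part_mul:
  assumes wm: "wm_decomp A Ts" and u: "u \<in> ss_part A Ts" and v: "v \<in> ss_part A Ts"
  shows "mu u v \<in> ss_part A Ts"
proof -
  obtain bs bs' where bs: "u = lsum A bs" "length bs = length Ts" "\<forall>i<length Ts. bs ! i \<in> Ts ! i"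
    and bs': "v = lsum A bs'" "length bs' = length Ts" "\<forall>i<length Ts. bs' ! i \<in> Ts ! i"
    using u v by (auto elim!: ss_partE)
  have C: "set bs \<subseteq> C" "set bs' \<subseteq> C"
    using wm_components_carrier[OF wm] bs bs' by auto
  have "mu u (bs' ! j) = mu (bs ! j) (bs' ! j)" if j: "j < length Ts" for j
  proof -
    have "bs' ! j \<in> C" using C(2) bs'(2) j by auto
    then have "mu u (bs' ! j) = lsum A (map (\<lambda>x. mu x (bs' ! j)) bs)"
      using bs(1) C(1) by (simp add: lsum_mul)
    also have "\<dots> = mu (bs ! j) (bs' ! j)"
      using C bs bs' j \<open>bs' ! j \<in> C\<close> wm_orthogonal[OF wm]
      by (subst lsum_single[where j = j]) auto
    finally show ?thesis .
  qed
  then have "map (mu u) bs' = map2 mu bs bs'"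
    using bs(2) bs'(2) by (intro nth_equalityI) auto
  then have "mu u v = lsum A (map2 mu bs bs')"
    using bs C bs'(1) by (simp add: mul_lsum)
  moreover have "\<forall>i<length Ts. map2 mu bs bs' ! i \<in> Ts ! i"
    using bs bs' wm_component_nth_subalgebra[OF wm] by (simp add: subalgebra_def)
  ultimately show ?thesis
    using bs(2) bs'(2) ss_partI[of "map2 mu bs bs'"] by simp
qed

lemma subalgebra_ss_part:
  assumes wm: "wm_decomp A Ts"
  shows "subalgebra A (ss_part A Ts)"
proof -
  note comp = wm_component_nth_subalgebra[OF wm, unfolded subalgebra_def]
  show ?thesis
    unfolding subalgebra_def
  proof (intro conjI ballI allI)
    show "ss_part A Ts \<subseteq> C"
      using wm_components_carrier[OF wm] by (auto elim!: ss_partE)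
    show "z \<in> ss_part A Ts"
      using ss_partI[of "replicate (length Ts) z" Ts] comp by (simp add: lsum_zeros)
  next
    fix u v assume u: "u \<in> ss_part A Ts" and v: "v \<in> ss_part A Ts"
    show "mu u v \<in> ss_part A Ts" by (rule ss_part_mul[OF wm u v])
    obtain bs bs' where bs: "u = lsum A bs" "length bs = length Ts" "\<forall>i<length Ts. bs ! i \<in> Ts ! i"
      and bs': "v = lsum A bs'" "length bs' = length Ts" "\<forall>i<length Ts. bs' ! i \<in> Ts ! i"
      using u v by (auto elim!: ss_partE)
    then show "ad u v \<in> ss_part A Ts"
      using wm_components_carrier[OF wm] comp ss_partI[of "map2 ad bs bs'" Ts]
      by (simp add: lsum_map2_add)
  next
    fix c u assume "u \<in> ss_part A Ts"
    then obtain bs where bs: "u = lsum A bs" "length bs = length Ts" "\<forall>i<length Ts. bs ! i \<in> Ts ! i"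
      by (auto elim!: ss_partE)
    then show "sm c u \<in> ss_part A Ts"
      using wm_components_carrier[OF wm] comp ss_partI[of "map (sm c) bs" Ts]
      by (simp add: sm_lsum)
  qed
qed

lemma ss_part_rad:
  assumes wm: "wm_decomp A Ts" and u: "u \<in> ss_part A Ts" "u \<in> rad A"
  shows "u = z"
proof -
  obtain bs where bs: "u = lsum A bs" "length bs = length Ts" "\<forall>i<length Ts. bs ! i \<in> Ts ! i"
    using u by (auto elim!: ss_partE)
  have "u \<in> C" using u(2) by simp
  then have "ad (lsum A bs) (neg u) = z" using bs(1) by simp
  then have "\<forall>i<length Ts. bs ! i = z"
    using wm_independent[OF wm bs(2,3) rad_sm[OF u(2)]] by blast
  then have "\<forall>b\<in>set bs. b = z"
    using bs(2) by (auto simp: in_set_conv_nth)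
  then show ?thesis
    using bs(1) lsum_zeros by simp
qed

lemma ss_part_rad_span:
  assumes wm: "wm_decomp A Ts" and x: "x \<in> C"
  shows "\<exists>u\<in>ss_part A Ts. \<exists>j\<in>rad A. x = ad u j"
  using wm_spanning[OF wm x] ss_partI by blast

end

text \<open>Abstracts the semisimple part \<open>ss_part A Ts\<close> of a Wedderburn--Malcev decomposition.\<close>

locale rad_complement = assoc_alg A for A :: "('f::field, 'a) alg" +
  fixes S :: "'a set"
  assumes subalg: "subalgebra A S"
    and complement_rad: "u \<in> S \<Longrightarrow> u \<in> rad A \<Longrightarrow> u = azero A"
    and complement_span: "x \<in> acarrier A \<Longrightarrow> \<exists>u\<in>S. \<exists>j\<in>rad A. x = aadd A u j"
begin

definition ss_proj :: "'a \<Rightarrow> 'a" where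
  "ss_proj x = (SOME u. u \<in> S \<and> (\<exists>j\<in>rad A. x = ad u j))"

definition rad_proj :: "'a \<Rightarrow> 'a" where
  "rad_proj x = ad x (neg (ss_proj x))"

lemma S_closed:
  shows S_carrier: "u \<in> S \<Longrightarrow> u \<in> C" and S_zero: "z \<in> S"
    and S_add: "u \<in> S \<Longrightarrow> v \<in> S \<Longrightarrow> ad u v \<in> S"
    and S_mul: "u \<in> S \<Longrightarrow> v \<in> S \<Longrightarrow> mu u v \<in> S"
    and S_sm: "u \<in> S \<Longrightarrow> sm c u \<in> S"
  using subalg by (auto simp: subalgebra_def)

lemma decomp_unique:
  assumes u: "u \<in> S" "u' \<in> S" and j: "j \<in> rad A" "j' \<in> rad A" and eq: "ad u j = ad u' j'"
  shows "u = u'" and "j = j'"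
proof -
  have C: "u \<in> C" "u' \<in> C" "j \<in> C" "j' \<in> C" using u j S_carrier by auto
  define d where "d = ad j' (neg j)"
  have d: "d \<in> rad A" "d \<in> C" using j by (simp_all add: d_def rad_add rad_sm)
  have "u = ad (ad u' j') (neg j)" using eq_add_neg[OF C(1,3) eq] .
  then have "u = ad u' d" using C by (simp add: d_def add_assoc)
  then have "d = ad u (neg u')" using eq_add_neg[of d u' u] add_comm C d(2) by simp
  then have "d \<in> S" using u by (simp add: S_add S_sm)
  then have "d = z" using d(1) by (rule complement_rad)
  with \<open>u = ad u' d\<close> C show "u = u'" by simp
  then show "j = j'"
    using eq C add_left_cancel by blast
qed

lemma proj_decomp:
  assumes x: "x \<in> C"
  shows "ss_proj x \<in> S" and "rad_proj x \<in> rad A" and "x = ad (ss_proj x) (rad_proj x)"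
proof -
  have "\<exists>u. u \<in> S \<and> (\<exists>j\<in>rad A. x = ad u j)" using complement_span[OF x] by blast
  then have u: "ss_proj x \<in> S \<and> (\<exists>j\<in>rad A. x = ad (ss_proj x) j)"
    unfolding ss_proj_def by (rule someI_ex)
  then obtain j where j: "j \<in> rad A" "x = ad (ss_proj x) j" by blast
  have "j = rad_proj x"
    using eq_add_neg[of j "ss_proj x" x] j u S_carrier add_comm by (simp add: rad_proj_def)
  with u j show "ss_proj x \<in> S" "rad_proj x \<in> rad A" "x = ad (ss_proj x) (rad_proj x)" by auto
qed

lemma ss_proj_carrier: "x \<in> C \<Longrightarrow> ss_proj x \<in> C"
  and rad_proj_carrier: "x \<in> C \<Longrightarrow> rad_proj x \<in> C"
  using proj_decomp S_carrier by auto

lemma proj_eq: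
  assumes "u \<in> S" "j \<in> rad A"
  shows ss_proj_eq: "ss_proj (ad u j) = u" and rad_proj_eq: "rad_proj (ad u j) = j"
proof -
  have x: "ad u j \<in> C" using assms S_carrier by simp
  show "ss_proj (ad u j) = u" "rad_proj (ad u j) = j"
    using decomp_unique[OF proj_decomp(1)[OF x] assms(1) proj_decomp(2)[OF x] assms(2)]
      proj_decomp(3)[OF x, symmetric] by auto
qed

lemma ss_proj_S: "u \<in> S \<Longrightarrow> ss_proj u = u"
  using proj_eq[of u z] S_carrier by auto

lemma ss_proj_rad: "j \<in> rad A \<Longrightarrow> ss_proj j = z"
  and rad_proj_rad: "j \<in> rad A \<Longrightarrow> rad_proj j = j"
  using proj_eq[of z j] S_zero by auto

lemma proj_add:
  assumes x: "x \<in> C" and y: "y \<in> C"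
  shows ss_proj_add: "ss_proj (ad x y) = ad (ss_proj x) (ss_proj y)"
    and rad_proj_add: "rad_proj (ad x y) = ad (rad_proj x) (rad_proj y)"
proof -
  have "ad x y = ad (ad (ss_proj x) (ss_proj y)) (ad (rad_proj x) (rad_proj y))"
    using proj_decomp[OF x] proj_decomp[OF y] ss_proj_carrier rad_proj_carrier x y
    by (metis add_add_swap)
  then show "ss_proj (ad x y) = ad (ss_proj x) (ss_proj y)"
    and "rad_proj (ad x y) = ad (rad_proj x) (rad_proj y)"
    using proj_eq proj_decomp x y by (simp_all add: S_add rad_add)
qed

lemma proj_sm:
  assumes x: "x \<in> C"
  shows ss_proj_sm: "ss_proj (sm c x) = sm c (ss_proj x)"
    and rad_proj_sm: "rad_proj (sm c x) = sm c (rad_proj x)"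
proof -
  have "sm c x = ad (sm c (ss_proj x)) (sm c (rad_proj x))"
    using proj_decomp[OF x] ss_proj_carrier[OF x] rad_proj_carrier[OF x] by (metis sm_add)
  then show "ss_proj (sm c x) = sm c (ss_proj x)" and "rad_proj (sm c x) = sm c (rad_proj x)"
    using proj_eq proj_decomp x by (simp_all add: S_sm rad_sm)
qed

text \<open>The radical is an ideal, so \<open>ss_proj\<close> is multiplicative.\<close>

lemma ss_proj_mul:
  assumes x: "x \<in> C" and y: "y \<in> C"
  shows "ss_proj (mu x y) = mu (ss_proj x) (ss_proj y)"
proof -
  let ?u = "ss_proj x" and ?j = "rad_proj x" and ?u' = "ss_proj y" and ?j' = "rad_proj y"
  have C: "?u \<in> C" "?j \<in> C" "?u' \<in> C" "?j' \<in> C"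
    using ss_proj_carrier rad_proj_carrier x y by auto
  have "mu x y = mu (ad ?u ?j) (ad ?u' ?j')"
    using proj_decomp x y by simp
  also have "\<dots> = ad (mu ?u ?u') (ad (mu ?u ?j') (mu ?j (ad ?u' ?j')))"
    using C by (simp add: distrib_left distrib_right add_ac)
  finally have "mu x y = ad (mu ?u ?u') (ad (mu ?u ?j') (mu ?j (ad ?u' ?j')))" .
  moreover have "mu ?u ?u' \<in> S"
    using proj_decomp x y by (simp add: S_mul)
  moreover have "ad (mu ?u ?j') (mu ?j (ad ?u' ?j')) \<in> rad A"
    using proj_decomp x y C by (simp add: rad_add rad_mul_left rad_mul_right)
  ultimately show ?thesis using ss_proj_eq by simp
qed

end

lemma (in assoc_alg) rad_complement_ss_part:
  "wm_decomp A Ts \<Longrightarrow> rad_complement A (ss_part A Ts)"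
  by unfold_locales (simp_all add: subalgebra_ss_part ss_part_rad ss_part_rad_span)

section \<open>Transfer of fullness\<close>

lemma subalgebra_hom_image:
  assumes h: "alg_hom A B h" and into: "h ` acarrier A \<subseteq> acarrier B" and S: "subalgebra A S"
  shows "subalgebra B (h ` S)"
proof -
  have [simp]: "x \<in> S \<Longrightarrow> x \<in> acarrier A" for x using S by (auto simp: subalgebra_def)
  show ?thesis
    using S into unfolding subalgebra_def
    by (auto simp flip: alg_homD[OF h] intro!: imageI)
qed

lemma alg_iso_sub_image:
  assumes h: "alg_hom A B h" and S: "S \<subseteq> acarrier A" and inj: "inj_on h S"
  shows "alg_iso (sub A S) (sub B (h ` S)) h"
proof -
  have [simp]: "x \<in> S \<Longrightarrow> x \<in> acarrier A" for x using S by blast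
  show ?thesis
    using inj unfolding alg_iso_def by (simp add: bij_betw_def alg_homD[OF h])
qed

text \<open>Instances: isomorphisms, and the embedding of \<open>T1\<close> into the fusion.\<close>

definition rad_embedding :: "('f, 'a) alg \<Rightarrow> ('f, 'b) alg \<Rightarrow> ('a \<Rightarrow> 'b) \<Rightarrow> bool" where
  "rad_embedding A B h \<longleftrightarrow> alg_hom A B h \<and> inj_on h (acarrier A) \<and> h ` acarrier A \<subseteq> acarrier B \<and>
     (\<forall>x\<in>acarrier A. h x \<in> rad B \<longleftrightarrow> x \<in> rad A) \<and>
     (\<forall>y\<in>acarrier B. \<exists>x\<in>acarrier A. \<exists>r\<in>rad B. y = aadd B (h x) r)"

locale rad_embedding_pair = A: assoc_alg A + B: assoc_alg B
  for A :: "('f::field, 'a) alg" and B :: "('f, 'b) alg" +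
  fixes h :: "'a \<Rightarrow> 'b"
  assumes rad_emb: "rad_embedding A B h"
begin

lemma hom: "alg_hom A B h"
  and inj: "inj_on h A.C"
  and into: "x \<in> A.C \<Longrightarrow> h x \<in> B.C"
  and rad_iff: "x \<in> A.C \<Longrightarrow> h x \<in> rad B \<longleftrightarrow> x \<in> rad A"
  and span: "y \<in> B.C \<Longrightarrow> \<exists>x\<in>A.C. \<exists>r\<in>rad B. y = B.ad (h x) r"
  using rad_emb by (auto simp: rad_embedding_def)

lemma wm_image_spanning:
  assumes wm: "wm_decomp A Ts" and y: "y \<in> B.C"
  shows "\<exists>bs r. length bs = length Ts \<and> (\<forall>i<length Ts. bs ! i \<in> map ((`) h) Ts ! i) \<and>
    r \<in> rad B \<and> y = B.ad (lsum B bs) r"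
proof -
  obtain x r where x: "x \<in> A.C" "r \<in> rad B" "y = B.ad (h x) r"
    using span[OF y] by blast
  then obtain bs j where bs: "length bs = length Ts" "\<forall>i<length Ts. bs ! i \<in> Ts ! i"
    and j: "j \<in> rad A" "x = A.ad (lsum A bs) j"
    using A.wm_spanning[OF wm] by blast
  have C: "set bs \<subseteq> A.C" using A.wm_components_carrier[OF wm bs] .
  have "y = B.ad (B.ad (lsum B (map h bs)) (h j)) r"
    using x j C by (simp add: alg_homD(2)[OF hom] A.alg_hom_lsum[OF hom])
  also have "\<dots> = B.ad (lsum B (map h bs)) (B.ad (h j) r)"
    using C j x(2) into by (intro B.add_assoc B.lsum_closed) auto
  finally show ?thesis
    using bs j x(2) rad_iff[of j] B.rad_add
    by (intro exI[of _ "map h bs"] exI[of _ "B.ad (h j) r"]) auto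
qed

lemma wm_image_independent:
  assumes wm: "wm_decomp A Ts" and bs: "length bs = length Ts" "\<forall>i<length Ts. bs ! i \<in> map ((`) h) Ts ! i"
    and r: "r \<in> rad B" and zero: "B.ad (lsum B bs) r = B.z"
  shows "(\<forall>i<length Ts. bs ! i = B.z) \<and> r = B.z"
proof -
  define as where "as = map (inv_into A.C h) bs"
  have as: "length as = length Ts" "\<forall>i<length Ts. as ! i \<in> Ts ! i \<and> h (as ! i) = bs ! i"
    using bs A.wm_component_nth_subalgebra[OF wm] inj
    by (auto simp: as_def subalgebra_def subset_iff)
  then have "map h as = bs" using bs(1) by (intro nth_equalityI) auto
  have C: "set as \<subseteq> A.C" using A.wm_components_carrier[OF wm] as by auto
  let ?u = "lsum A as"
  have u: "?u \<in> A.C" "h ?u = lsum B bs"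
    using C \<open>map h as = bs\<close> by (auto simp: A.alg_hom_lsum[OF hom])
  have "h ?u = B.neg r"
    using zero u into[OF u(1)] r B.eq_add_neg[of "h ?u" r B.z] by simp
  then have "?u \<in> rad A" using rad_iff[OF u(1)] r B.rad_sm by simp
  then have "A.ad ?u (A.neg ?u) = A.z" "A.neg ?u \<in> rad A" using u(1) A.rad_sm by simp_all
  then have as_zero: "\<forall>i<length Ts. as ! i = A.z"
    using A.wm_independent[OF wm as(1)] as(2) by blast
  then have "\<forall>i<length Ts. bs ! i = B.z"
    using as(2) alg_homD(1)[OF hom] by metis
  moreover have "?u = A.z"
    using as_zero as(1) by (intro A.lsum_zeros) (auto simp: in_set_conv_nth)
  then have "lsum B bs = B.z" using alg_homD(1)[OF hom] u(2) by simp
  then have "r = B.z" using zero r by simp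
  ultimately show ?thesis by simp
qed

lemma wm_decomp_image:
  assumes wm: "wm_decomp A Ts"
  shows "wm_decomp B (map ((`) h) Ts)"
proof -
  have components: "subalgebra B (h ` S) \<and> simple_alg (sub B (h ` S))" if "S \<in> set Ts" for S
  proof
    have sub: "subalgebra A S" and simple: "simple_alg (sub A S)"
      using that A.wm_component_subalgebra[OF wm] A.wm_component_simple[OF wm] by auto
    have SC: "S \<subseteq> A.C" using sub by (simp add: subalgebra_def)
    show "subalgebra B (h ` S)"
      using subalgebra_hom_image[OF hom _ sub] into by auto
    show "simple_alg (sub B (h ` S))"
      by (rule simple_alg_iso[OF algebra_sub[OF A.is_algebra sub]
            alg_iso_sub_image[OF hom SC inj_on_subset[OF inj SC]] simple])
  qed
  have orthogonal: "B.mu x' y' = B.z"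
    if ij: "i < length Ts" "j < length Ts" "i \<noteq> j"
      and xy': "x' \<in> map ((`) h) Ts ! i" "y' \<in> map ((`) h) Ts ! j" for i j x' y'
  proof -
    obtain x y where xy: "x \<in> Ts ! i" "y \<in> Ts ! j" "x' = h x" "y' = h y"
      using ij xy' by auto
    then have "x \<in> A.C" "y \<in> A.C"
      using ij A.wm_component_carrier[OF wm] by auto
    then have "B.mu x' y' = h (A.mu x y)" using xy by (simp add: alg_homD(3)[OF hom])
    then show ?thesis using A.wm_orthogonal[OF wm ij xy(1,2)] alg_homD(1)[OF hom] by simp
  qed
  show ?thesis
    unfolding wm_decomp_def length_map
  proof (intro conjI allI impI ballI)
    show "subalgebra B S'" "simple_alg (sub B S')" if "S' \<in> set (map ((`) h) Ts)" for S'
      using that components by auto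
  next
    fix y assume "y \<in> B.C"
    then show "\<exists>bs r. length bs = length Ts \<and> (\<forall>i<length Ts. bs ! i \<in> map ((`) h) Ts ! i) \<and>
        r \<in> rad B \<and> y = B.ad (lsum B bs) r"
      by (rule wm_image_spanning[OF wm])
  qed (use orthogonal wm_image_independent[OF wm] in blast)+
qed

lemma full_image:
  assumes full: "full A" and fin: "fin_dim B"
  shows "full B"
proof -
  obtain Ts ts js where Ts: "wm_decomp A Ts" "Ts \<noteq> []"
    and ts: "length ts = length Ts" "\<forall>i<length Ts. ts ! i \<in> Ts ! i"
    and js: "length js + 1 = length Ts" "set js \<subseteq> rad A"
    and nonzero: "lprod A (alternate ts js) \<noteq> A.z"
    using full unfolding full_def by blast
  have "set ts \<subseteq> A.C" by (rule A.wm_components_carrier[OF Ts(1) ts])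
  moreover have "set js \<subseteq> A.C" using js(2) A.rad_subset by (rule order_trans)
  ultimately have C: "set (alternate ts js) \<subseteq> A.C" using set_alternate[of ts js] by blast
  have "lprod B (alternate (map h ts) (map h js)) = h (lprod A (alternate ts js))"
    using A.alg_hom_lprod[OF hom C] by (simp add: map_alternate)
  also have "\<dots> \<noteq> h A.z"
    using nonzero inj_onD[OF inj] C by blast
  finally have "lprod B (alternate (map h ts) (map h js)) \<noteq> B.z"
    by (simp add: alg_homD(1)[OF hom])
  moreover have "set (map h js) \<subseteq> rad B"
    using js(2) rad_iff A.rad_closed by auto
  moreover have "\<forall>i<length Ts. map h ts ! i \<in> map ((`) h) Ts ! i"
    using ts by simp
  ultimately show ?thesis
    unfolding full_def using B.is_algebra fin wm_decomp_image[OF Ts(1)] Ts(2) ts(1) js(1)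
    by (intro conjI exI[of _ "map ((`) h) Ts"] exI[of _ "map h ts"] exI[of _ "map h js"]) simp_all
qed

end

lemma rad_embedding_alg_iso:
  assumes A: "algebra A" and iso: "alg_iso A B h"
  shows "rad_embedding A B h"
proof -
  interpret A: assoc_alg A by (rule assoc_alg.intro[OF A])
  interpret B: assoc_alg B by (rule assoc_alg.intro[OF algebra_alg_iso[OF A iso]])
  have carrier: "B.C = h ` A.C" by (rule alg_iso_carrier[OF iso])
  have "h x \<in> rad B \<longleftrightarrow> x \<in> rad A" if x: "x \<in> A.C" for x
  proof
    assume "h x \<in> rad B"
    then obtain x' where "x' \<in> rad A" "h x = h x'" using rad_alg_iso[OF A iso] by auto
    then show "x \<in> rad A"
      using x inj_onD[OF alg_iso_inj_on[OF iso]] by (metis A.rad_closed)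
  qed (use rad_alg_iso[OF A iso] in blast)
  moreover have "\<exists>x\<in>A.C. \<exists>r\<in>rad B. y = B.ad (h x) r" if y: "y \<in> B.C" for y
  proof -
    obtain x where "x \<in> A.C" "y = h x" using y carrier by auto
    then show ?thesis using carrier by (intro bexI[of _ x] bexI[of _ B.z]) auto
  qed
  ultimately show ?thesis
    unfolding rad_embedding_def
    using alg_iso_imp_alg_hom[OF iso] alg_iso_inj_on[OF iso] carrier by blast
qed

definition lin_map :: "('f, 'a) alg \<Rightarrow> ('f, 'b) alg \<Rightarrow> ('a \<Rightarrow> 'b) \<Rightarrow> bool" where
  "lin_map A B h \<longleftrightarrow> h (azero A) = azero B \<and>
     (\<forall>x\<in>acarrier A. \<forall>y\<in>acarrier A. h (aadd A x y) = aadd B (h x) (h y)) \<and>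
     (\<forall>c. \<forall>x\<in>acarrier A. h (asmult A c x) = asmult B c (h x))"

lemma alg_hom_imp_lin_map: "alg_hom A B h \<Longrightarrow> lin_map A B h"
  by (simp add: alg_hom_def lin_map_def)

context assoc_alg
begin

lemma set_lin_comb: "set bs \<subseteq> C \<Longrightarrow> set (map2 sm cs bs) \<subseteq> C"
  by (auto dest!: set_zip_rightD)

lemma lin_comb_closed: "set bs \<subseteq> C \<Longrightarrow> lsum A (map2 sm cs bs) \<in> C"
  using set_lin_comb by blast

lemma lin_map_lin_comb:
  assumes h: "lin_map A B h" and bs: "set bs \<subseteq> C"
  shows "h (lsum A (map2 sm cs bs)) = lsum B (map2 (asmult B) cs (map h bs))"
  using bs
proof (induction cs arbitrary: bs)
  case (Cons c cs)
  then show ?case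
    using h lin_comb_closed by (cases bs) (auto simp: lin_map_def)
qed (use h in \<open>simp add: lin_map_def\<close>)

lemma lin_comb_append:
  assumes "length cs = length bs" "set bs \<subseteq> C" "set bs' \<subseteq> C"
  shows "lsum A (map2 sm (cs @ ds) (bs @ bs')) = ad (lsum A (map2 sm cs bs)) (lsum A (map2 sm ds bs'))"
proof -
  have "map2 sm (cs @ ds) (bs @ bs') = map2 sm cs bs @ map2 sm ds bs'" using assms(1) by simp
  then show ?thesis
    by (simp only: lsum_append[OF set_lin_comb[OF assms(2)] set_lin_comb[OF assms(3)]])
qed

lemma fin_dim_sum_of_lin_images:
  assumes A1: "algebra A1" and A2: "algebra A2"
    and h1: "lin_map A1 A h1" "h1 ` acarrier A1 \<subseteq> C" "fin_dim A1"
    and h2: "lin_map A2 A h2" "h2 ` acarrier A2 \<subseteq> C" "fin_dim A2"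
    and span: "\<forall>y\<in>C. \<exists>x1\<in>acarrier A1. \<exists>x2\<in>acarrier A2. y = ad (h1 x1) (h2 x2)"
  shows "fin_dim A"
proof -
  interpret A1: assoc_alg A1 by (rule assoc_alg.intro[OF A1])
  interpret A2: assoc_alg A2 by (rule assoc_alg.intro[OF A2])
  obtain bs1 where bs1: "set bs1 \<subseteq> A1.C"
    "\<forall>x\<in>A1.C. \<exists>cs. length cs = length bs1 \<and> x = lsum A1 (map2 A1.sm cs bs1)"
    using h1(3) by (auto simp: fin_dim_def)
  obtain bs2 where bs2: "set bs2 \<subseteq> A2.C"
    "\<forall>x\<in>A2.C. \<exists>cs. length cs = length bs2 \<and> x = lsum A2 (map2 A2.sm cs bs2)"
    using h2(3) by (auto simp: fin_dim_def)
  let ?bs = "map h1 bs1 @ map h2 bs2"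
  have C: "set (map h1 bs1) \<subseteq> C" "set (map h2 bs2) \<subseteq> C"
    using bs1(1) bs2(1) h1(2) h2(2) by (auto simp: image_subset_iff subset_iff)
  have "\<exists>cs. length cs = length ?bs \<and> y = lsum A (map2 sm cs ?bs)" if y: "y \<in> C" for y
  proof -
    obtain x1 x2 where x: "x1 \<in> A1.C" "x2 \<in> A2.C" "y = ad (h1 x1) (h2 x2)"
      using span y by blast
    obtain cs1 where cs1: "length cs1 = length bs1" "x1 = lsum A1 (map2 A1.sm cs1 bs1)"
      using bs1(2) x(1) by blast
    obtain cs2 where cs2: "length cs2 = length bs2" "x2 = lsum A2 (map2 A2.sm cs2 bs2)"
      using bs2(2) x(2) by blast
    have "lsum A (map2 sm (cs1 @ cs2) ?bs) =
        ad (lsum A (map2 sm cs1 (map h1 bs1))) (lsum A (map2 sm cs2 (map h2 bs2)))"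
      using cs1(1) C by (intro lin_comb_append) simp_all
    also have "\<dots> = y"
      using x(3) cs1(2) cs2(2) bs1(1) bs2(1)
      by (simp add: A1.lin_map_lin_comb[OF h1(1)] A2.lin_map_lin_comb[OF h2(1)])
    finally show ?thesis using cs1(1) cs2(1) by (intro exI[of _ "cs1 @ cs2"]) simp
  qed
  then show ?thesis
    unfolding fin_dim_def using C by (intro exI[of _ ?bs]) auto
qed

end

lemma fin_dim_alg_iso:
  assumes A: "algebra A" and iso: "alg_iso A B h" and fin: "fin_dim A"
  shows "fin_dim B"
proof -
  interpret B: assoc_alg B by (rule assoc_alg.intro[OF algebra_alg_iso[OF A iso]])
  have lin: "lin_map A B h" by (rule alg_hom_imp_lin_map[OF alg_iso_imp_alg_hom[OF iso]])
  have "\<exists>x1\<in>acarrier A. \<exists>x2\<in>acarrier A. y = B.ad (h x1) (h x2)" if y: "y \<in> B.C" for y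
  proof -
    obtain x where "x \<in> acarrier A" "y = h x" using y alg_iso_carrier[OF iso] by auto
    then show ?thesis
      using y lin assoc_alg.zero_closed[OF assoc_alg.intro[OF A]]
      by (intro bexI[of _ x] bexI[of _ "azero A"]) (auto simp: lin_map_def)
  qed
  then show ?thesis
    using B.fin_dim_sum_of_lin_images[OF A A lin _ fin lin _ fin] alg_iso_carrier[OF iso]
    by blast
qed

lemma full_alg_iso:
  assumes full: "full A" and iso: "alg_iso A B h"
  shows "full B"
proof -
  have A: "algebra A" and fin: "fin_dim A" using full by (simp_all add: full_def)
  interpret rad_embedding_pair A B h
    by (intro rad_embedding_pair.intro assoc_alg.intro rad_embedding_pair_axioms.intro
        A algebra_alg_iso[OF A iso] rad_embedding_alg_iso[OF A iso])
  show ?thesis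
    using full_image[OF full fin_dim_alg_iso[OF A iso fin]] .
qed

section \<open>Identities of direct sums\<close>

lemma azero_dsum: "azero (dsum T n) i = (if i < n then azero (T i) else undefined)"
  and mem_acarrier_dsum:
    "g \<in> acarrier (dsum T n) \<longleftrightarrow> (\<forall>i<n. g i \<in> acarrier (T i)) \<and> (\<forall>i\<ge>n. g i = undefined)"
  by (simp_all add: dsum_def)

lemma total_hom_dsum_proj: "i < n \<Longrightarrow> total_hom (dsum T n) (T i) (\<lambda>g. g i)"
  by (simp add: total_hom_def dsum_def)

lemma eval_nc_dsum:
  "eval_nc (dsum T n) f s i = (if i < n then eval_nc (T i) f (\<lambda>k. s k i) else undefined)"
proof (cases "i < n")
  case True
  then show ?thesis using total_hom_eval_nc[OF total_hom_dsum_proj[OF True]] by (simp add: comp_def)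
next
  case False
  have "lsum (dsum T n) xs i = undefined" for xs
    using False by (induction xs) (auto simp: dsum_def)
  with False show ?thesis by (simp add: eval_nc_def)
qed

lemma is_identity_dsum:
  assumes n: "n > 0" and zero: "\<forall>i<n. azero (T i) \<in> acarrier (T i)"
  shows "is_identity (dsum T n) f \<longleftrightarrow> (\<forall>i<n. is_identity (T i) f)"
proof (intro iffI allI impI)
  fix i assume f: "is_identity (dsum T n) f" and i: "i < n"
  show "is_identity (T i) f"
    unfolding is_identity_def
  proof (intro conjI allI impI)
    show "\<forall>(c, w)\<in>set f. w \<noteq> []" using f by (simp add: is_identity_def)
    fix s :: "nat \<Rightarrow> _" assume s: "\<forall>k. s k \<in> acarrier (T i)"
    define s' where "s' k = (\<lambda>j. if j = i then s k else if j < n then azero (T j) else undefined)" for k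
    have "s' k \<in> acarrier (dsum T n)" for k
      using s zero i by (auto simp: s'_def mem_acarrier_dsum)
    then have "eval_nc (dsum T n) f s' i = azero (dsum T n) i"
      using f by (simp add: is_identity_def)
    moreover have "eval_nc (dsum T n) f s' i = eval_nc (T i) f s"
      using i by (simp add: eval_nc_dsum s'_def)
    ultimately show "eval_nc (T i) f s = azero (T i)"
      using i by (simp add: azero_dsum)
  qed
next
  assume f: "\<forall>i<n. is_identity (T i) f"
  show "is_identity (dsum T n) f"
    unfolding is_identity_def
  proof (intro conjI allI impI ext)
    show "\<forall>(c, w)\<in>set f. w \<noteq> []" using f n by (simp add: is_identity_def)
    fix s :: "nat \<Rightarrow> nat \<Rightarrow> _" and i assume "\<forall>k. s k \<in> acarrier (dsum T n)"
    then have "i < n \<Longrightarrow> \<forall>k. s k i \<in> acarrier (T i)" by (simp add: mem_acarrier_dsum)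
    then show "eval_nc (dsum T n) f s i = azero (dsum T n) i"
      using f by (simp add: eval_nc_dsum azero_dsum is_identity_def)
  qed
qed

lemma full_zero_closed: "full T \<Longrightarrow> azero T \<in> acarrier T"
  using assoc_alg.zero_closed[OF assoc_alg.intro, of T] by (simp add: full_def)

lemma is_identity_presentation:
  assumes "presentation A P n" and "n > 0"
  shows "is_identity A f \<longleftrightarrow> (\<forall>i<n. is_identity (P i) f)"
proof -
  have "\<forall>i<n. azero (P i) \<in> acarrier (P i)"
    using assms(1) full_zero_closed unfolding presentation_def by blast
  then show ?thesis
    using assms is_identity_dsum[of n P f] by (simp add: presentation_def pi_equiv_def)
qed

lemma presentation_replace_summand:
  assumes P: "presentation A P n" and k: "k < n"
    and full: "\<forall>i<n. full (Q i)"
    and keep: "\<And>i f. i < n \<Longrightarrow> i \<noteq> k \<Longrightarrow> is_identity (Q i) f \<longleftrightarrow> is_identity (P i) f"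
    and replace: "\<And>f. is_identity (Q k) f \<longleftrightarrow> is_identity (P k) f \<and> is_identity B f"
    and weaker: "\<And>f. is_identity A f \<Longrightarrow> is_identity B f"
  shows "presentation A Q n"
  unfolding presentation_def pi_equiv_def
proof (rule conjI[OF full], intro allI)
  fix f
  have n: "n > 0" using k by simp
  have "(\<forall>i<n. is_identity (Q i) f) \<longleftrightarrow> (\<forall>i<n. is_identity (P i) f) \<and> is_identity B f"
    using keep replace k by metis
  also have "\<dots> \<longleftrightarrow> is_identity A f"
    using is_identity_presentation[OF P n] weaker by blast
  moreover have "\<forall>i<n. azero (Q i) \<in> acarrier (Q i)"
    using full full_zero_closed by blast
  then have "is_identity (dsum Q n) f \<longleftrightarrow> (\<forall>i<n. is_identity (Q i) f)"
    by (rule is_identity_dsum[OF n])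
  ultimately show "is_identity A f \<longleftrightarrow> is_identity (dsum Q n) f"
    by simp
qed

section \<open>Subdirect products\<close>

definition subdirect :: "('f, 'a) alg \<Rightarrow> ('f, 'b) alg \<Rightarrow> ('a \<times> 'b) set \<Rightarrow> bool" where
  "subdirect A B G \<longleftrightarrow> subalgebra (prod_alg A B) G \<and> fst ` G = acarrier A \<and> snd ` G = acarrier B"

lemma algebra_subdirect:
  "algebra A \<Longrightarrow> algebra B \<Longrightarrow> subdirect A B G \<Longrightarrow> algebra (sub (prod_alg A B) G)"
  by (simp add: subdirect_def algebra_sub algebra_prod_alg)

lemma total_hom_subdirect_fst: "total_hom (sub (prod_alg A B) G) A fst"
  and total_hom_subdirect_snd: "total_hom (sub (prod_alg A B) G) B snd"
  by (simp_all add: total_hom_sub total_hom_fst total_hom_snd)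

lemma is_identity_subdirect:
  fixes A :: "('f::field, 'a) alg" and B :: "('f, 'b) alg"
  assumes A: "algebra A" and B: "algebra B" and G: "subdirect A B G"
  shows "is_identity (sub (prod_alg A B) G) f \<longleftrightarrow> is_identity A f \<and> is_identity B f"
proof -
  interpret AB: assoc_alg "sub (prod_alg A B) G"
    by (rule assoc_alg.intro[OF algebra_subdirect[OF A B G]])
  have GC: "G \<subseteq> acarrier A \<times> acarrier B" using G by (simp add: subdirect_def subalgebra_def)
  show ?thesis
  proof
    assume f: "is_identity (sub (prod_alg A B) G) f"
    show "is_identity A f \<and> is_identity B f"
      using AB.is_identity_hom_image[OF total_hom_imp_alg_hom[OF total_hom_subdirect_fst] _ f]
        AB.is_identity_hom_image[OF total_hom_imp_alg_hom[OF total_hom_subdirect_snd] _ f] G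
      by (simp add: subdirect_def)
  next
    assume f: "is_identity A f \<and> is_identity B f"
    have "eval_nc (sub (prod_alg A B) G) f s = (eval_nc A f (fst \<circ> s), eval_nc B f (snd \<circ> s))" for s
      using total_hom_eval_nc[OF total_hom_subdirect_fst] total_hom_eval_nc[OF total_hom_subdirect_snd]
      by (metis prod.collapse)
    moreover have "\<forall>i. (fst \<circ> s) i \<in> acarrier A \<and> (snd \<circ> s) i \<in> acarrier B"
      if "\<forall>i. s i \<in> G" for s :: "nat \<Rightarrow> 'a \<times> 'b"
      using that subsetD[OF GC] by (auto simp: mem_Times_iff)
    ultimately show "is_identity (sub (prod_alg A B) G) f"
      using f by (simp add: is_identity_def)
  qed
qed

lemma rad_subdirect_subset:
  assumes A: "algebra A" and B: "algebra B" and G: "subdirect A B G"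
  shows "rad (sub (prod_alg A B) G) \<subseteq> rad A \<times> rad B"
proof -
  interpret AB: assoc_alg "sub (prod_alg A B) G"
    by (rule assoc_alg.intro[OF algebra_subdirect[OF A B G]])
  have "fst ` rad (sub (prod_alg A B) G) \<subseteq> rad A" "snd ` rad (sub (prod_alg A B) G) \<subseteq> rad B"
    using AB.rad_hom_image[OF total_hom_imp_alg_hom[OF total_hom_subdirect_fst]]
      AB.rad_hom_image[OF total_hom_imp_alg_hom[OF total_hom_subdirect_snd]] G
    by (simp_all add: subdirect_def)
  then show ?thesis by (auto simp: mem_Times_iff)
qed

lemma alg_ideal_Times:
  assumes G: "subalgebra (prod_alg A B) G" and IJ: "I \<times> J \<subseteq> G"
    and I: "alg_ideal A I" and J: "alg_ideal B J"
  shows "alg_ideal (sub (prod_alg A B) G) (I \<times> J)"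
proof -
  have GC: "G \<subseteq> acarrier A \<times> acarrier B" using G by (simp add: subalgebra_def)
  show ?thesis
    unfolding alg_ideal_def subalgebra_def sub_simps
    using I J IJ subsetD[OF GC] by (auto simp: alg_ideal_def subalgebra_def mem_Times_iff)
qed

lemma nilpotent_set_Times:
  assumes A: "algebra A" and B: "algebra B"
    and I: "alg_ideal A I" "nilpotent_set A I" and J: "alg_ideal B J" "nilpotent_set B J"
  shows "nilpotent_set (sub (prod_alg A B) G) (I \<times> J)"
proof -
  interpret A: assoc_alg A by (rule assoc_alg.intro[OF A])
  interpret B: assoc_alg B by (rule assoc_alg.intro[OF B])
  obtain m1 where m1: "m1 > 0" "\<And>xs. m1 \<le> length xs \<Longrightarrow> set xs \<subseteq> I \<Longrightarrow> lprod A xs = A.z"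
    using A.nilpotent_lprod_ge[OF A.ideal_subset[OF I(1)] I(2)] by blast
  obtain m2 where m2: "m2 > 0" "\<And>xs. m2 \<le> length xs \<Longrightarrow> set xs \<subseteq> J \<Longrightarrow> lprod B xs = B.z"
    using B.nilpotent_lprod_ge[OF B.ideal_subset[OF J(1)] J(2)] by blast
  have "lprod (sub (prod_alg A B) G) ps = (A.z, B.z)"
    if "length ps = max m1 m2" "set ps \<subseteq> I \<times> J" for ps
  proof -
    have "set (map fst ps) \<subseteq> I" "set (map snd ps) \<subseteq> J"
      using that(2) by auto
    then have "lprod A (map fst ps) = A.z" "lprod B (map snd ps) = B.z"
      using that(1) by (auto intro!: m1(2) m2(2))
    then show ?thesis
      using total_hom_lprod[OF total_hom_subdirect_fst, of A B G ps]
        total_hom_lprod[OF total_hom_subdirect_snd, of A B G ps]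
      by (simp add: prod_eq_iff)
  qed
  then show ?thesis
    unfolding nilpotent_set_def using m1(1) by (intro exI[of _ "max m1 m2"]) auto
qed

lemma rad_subdirect_supset:
  assumes A: "algebra A" and B: "algebra B" and G: "subdirect A B G"
    and rad_G: "rad A \<times> rad B \<subseteq> G"
  shows "rad A \<times> rad B \<subseteq> rad (sub (prod_alg A B) G)"
proof (clarify)
  fix j1 j2 assume "j1 \<in> rad A" "j2 \<in> rad B"
  then obtain I J where I: "alg_ideal A I" "nilpotent_set A I" "j1 \<in> I"
    and J: "alg_ideal B J" "nilpotent_set B J" "j2 \<in> J"
    unfolding rad_def by blast
  have "I \<times> J \<subseteq> G" using I J rad_G unfolding rad_def by blast
  then have "alg_ideal (sub (prod_alg A B) G) (I \<times> J)"
    using G I(1) J(1) by (intro alg_ideal_Times) (simp_all add: subdirect_def)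
  moreover have "nilpotent_set (sub (prod_alg A B) G) (I \<times> J)"
    by (rule nilpotent_set_Times[OF A B I(1,2) J(1,2)])
  ultimately show "(j1, j2) \<in> rad (sub (prod_alg A B) G)"
    using I(3) J(3) unfolding rad_def by blast
qed

section \<open>The fusion\<close>

locale fusion_setting = T1: rad_complement T1 S1 + T2: rad_complement T2 S2
  for T1 :: "('f::field, 'a) alg" and S1 :: "'a set" and T2 :: "('f, 'b) alg" and S2 :: "'b set" +
  fixes \<phi> :: "'a \<Rightarrow> 'b"
  assumes phi_iso: "alg_iso (sub T1 S1) (sub T2 S2) \<phi>"
begin

lemma phi_image: "\<phi> ` S1 = S2"
  using alg_iso_carrier[OF phi_iso] by simp

lemma phi_closed: "u \<in> S1 \<Longrightarrow> \<phi> u \<in> S2"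
  using phi_image by blast

lemma phi_hom:
  shows phi_zero: "\<phi> T1.z = T2.z"
    and phi_add: "u \<in> S1 \<Longrightarrow> v \<in> S1 \<Longrightarrow> \<phi> (T1.ad u v) = T2.ad (\<phi> u) (\<phi> v)"
    and phi_mul: "u \<in> S1 \<Longrightarrow> v \<in> S1 \<Longrightarrow> \<phi> (T1.mu u v) = T2.mu (\<phi> u) (\<phi> v)"
    and phi_sm: "u \<in> S1 \<Longrightarrow> \<phi> (T1.sm c u) = T2.sm c (\<phi> u)"
  using alg_homD[OF alg_iso_imp_alg_hom[OF phi_iso]] by simp_all

text \<open>The semisimple part that the second component of a fusion element \<open>(x, y)\<close> must have.\<close>

definition ss_match :: "'a \<Rightarrow> 'b" where
  "ss_match x = \<phi> (T1.ss_proj x)"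

definition fusion_carrier :: "('a \<times> 'b) set" where
  "fusion_carrier = {(x, y). x \<in> T1.C \<and> y \<in> T2.C \<and> T2.ss_proj y = ss_match x}"

abbreviation "Fus \<equiv> sub (prod_alg T1 T2) fusion_carrier"

lemma ss_match_S2: "x \<in> T1.C \<Longrightarrow> ss_match x \<in> S2"
  by (simp add: ss_match_def phi_closed T1.proj_decomp(1))

lemma ss_match_hom: "alg_hom T1 T2 ss_match"
  unfolding alg_hom_def ss_match_def
  by (simp add: T1.ss_proj_S[OF T1.S_zero] phi_zero T1.proj_decomp(1) T1.ss_proj_add T1.ss_proj_mul
      T1.ss_proj_sm phi_add phi_mul phi_sm)

lemma ss_match_rad: "j \<in> rad T1 \<Longrightarrow> ss_match j = T2.z"
  by (simp add: ss_match_def T1.ss_proj_rad phi_zero)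

lemma fusion_eq: "fusion T1 T2 S1 \<phi> = Fus"
proof -
  have "{(aadd T1 u j1, aadd T2 (\<phi> u) j2) | u j1 j2. u \<in> S1 \<and> j1 \<in> rad T1 \<and> j2 \<in> rad T2} =
      fusion_carrier"
  proof (intro equalityI subsetI)
    fix p assume "p \<in> {(aadd T1 u j1, aadd T2 (\<phi> u) j2) | u j1 j2. u \<in> S1 \<and> j1 \<in> rad T1 \<and> j2 \<in> rad T2}"
    then obtain u j1 j2 where "p = (T1.ad u j1, T2.ad (\<phi> u) j2)" "u \<in> S1" "j1 \<in> rad T1" "j2 \<in> rad T2"
      by blast
    then show "p \<in> fusion_carrier"
      by (simp add: fusion_carrier_def ss_match_def T1.ss_proj_eq T2.ss_proj_eq phi_closed
          T1.S_carrier T2.S_carrier)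
  next
    fix p assume "p \<in> fusion_carrier"
    then obtain x y where p: "p = (x, y)" "x \<in> T1.C" "y \<in> T2.C" "T2.ss_proj y = \<phi> (T1.ss_proj x)"
      by (auto simp: fusion_carrier_def ss_match_def)
    then show "p \<in> {(aadd T1 u j1, aadd T2 (\<phi> u) j2) | u j1 j2. u \<in> S1 \<and> j1 \<in> rad T1 \<and> j2 \<in> rad T2}"
      using T1.proj_decomp[OF p(2)] T2.proj_decomp[OF p(3)] by auto
  qed
  then show ?thesis by (simp add: fusion_def sub_def)
qed

definition embed :: "'a \<Rightarrow> 'a \<times> 'b" where
  "embed x = (x, ss_match x)"

lemma embed_in_fusion: "x \<in> T1.C \<Longrightarrow> embed x \<in> fusion_carrier"
  using ss_match_S2 by (simp add: embed_def fusion_carrier_def T2.ss_proj_S T2.S_carrier)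

lemma lift_in_fusion:
  assumes y: "y \<in> T2.C"
  shows "(inv_into S1 \<phi> (T2.ss_proj y), y) \<in> fusion_carrier"
proof -
  let ?u = "inv_into S1 \<phi> (T2.ss_proj y)"
  have "T2.ss_proj y \<in> \<phi> ` S1" using T2.proj_decomp(1)[OF y] phi_image by simp
  then have "?u \<in> S1" "\<phi> ?u = T2.ss_proj y" by (simp_all add: inv_into_into f_inv_into_f)
  then show ?thesis
    using y by (simp add: fusion_carrier_def ss_match_def T1.ss_proj_S T1.S_carrier)
qed

lemma subalgebra_fusion: "subalgebra (prod_alg T1 T2) fusion_carrier"
  unfolding subalgebra_def
proof (intro conjI ballI allI)
  show "fusion_carrier \<subseteq> acarrier (prod_alg T1 T2)" by (auto simp: fusion_carrier_def)
  show "azero (prod_alg T1 T2) \<in> fusion_carrier"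
    by (simp add: fusion_carrier_def alg_homD(1)[OF ss_match_hom] T2.ss_proj_S[OF T2.S_zero])
next
  fix p q assume "p \<in> fusion_carrier" "q \<in> fusion_carrier"
  then obtain x y x' y' where "p = (x, y)" "q = (x', y')" "x \<in> T1.C" "y \<in> T2.C" "x' \<in> T1.C" "y' \<in> T2.C"
    "T2.ss_proj y = ss_match x" "T2.ss_proj y' = ss_match x'"
    by (auto simp: fusion_carrier_def)
  then show "aadd (prod_alg T1 T2) p q \<in> fusion_carrier" "amul (prod_alg T1 T2) p q \<in> fusion_carrier"
    by (simp_all add: fusion_carrier_def alg_homD[OF ss_match_hom] T2.ss_proj_add T2.ss_proj_mul)
next
  fix c p assume "p \<in> fusion_carrier"
  then obtain x y where "p = (x, y)" "x \<in> T1.C" "y \<in> T2.C" "T2.ss_proj y = ss_match x"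
    by (auto simp: fusion_carrier_def)
  then show "asmult (prod_alg T1 T2) c p \<in> fusion_carrier"
    by (simp add: fusion_carrier_def alg_homD[OF ss_match_hom] T2.ss_proj_sm)
qed

lemma subdirect_fusion: "subdirect T1 T2 fusion_carrier"
proof -
  have "T1.C \<subseteq> fst ` fusion_carrier"
    using embed_in_fusion by (force simp: embed_def)
  moreover have "T2.C \<subseteq> snd ` fusion_carrier"
    using lift_in_fusion by force
  moreover have "fst ` fusion_carrier \<subseteq> T1.C" "snd ` fusion_carrier \<subseteq> T2.C"
    by (auto simp: fusion_carrier_def)
  ultimately show ?thesis
    unfolding subdirect_def using subalgebra_fusion by blast
qed

lemma algebra_fusion: "algebra Fus"
  by (rule algebra_subdirect[OF T1.is_algebra T2.is_algebra subdirect_fusion])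

lemma rad_fusion: "rad Fus = rad T1 \<times> rad T2"
proof
  show "rad Fus \<subseteq> rad T1 \<times> rad T2"
    by (rule rad_subdirect_subset[OF T1.is_algebra T2.is_algebra subdirect_fusion])
  have "rad T1 \<times> rad T2 \<subseteq> fusion_carrier"
    by (auto simp: fusion_carrier_def ss_match_rad T2.ss_proj_rad)
  then show "rad T1 \<times> rad T2 \<subseteq> rad Fus"
    by (rule rad_subdirect_supset[OF T1.is_algebra T2.is_algebra subdirect_fusion])
qed

lemma fusion_decomp:
  assumes "(x, y) \<in> fusion_carrier"
  shows "(x, y) = aadd Fus (embed x) (T1.z, T2.rad_proj y)"
  using assms T2.proj_decomp(3)[of y] by (simp add: fusion_carrier_def embed_def)

lemma rad_proj_pair_in_rad: "y \<in> T2.C \<Longrightarrow> (T1.z, T2.rad_proj y) \<in> rad Fus"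
  by (simp add: rad_fusion T2.proj_decomp(2))

lemma rad_embedding_embed: "rad_embedding T1 Fus embed"
  unfolding rad_embedding_def
proof (intro conjI ballI)
  show "alg_hom T1 Fus embed"
    using alg_homD[OF ss_match_hom] by (simp add: alg_hom_def embed_def)
  show "inj_on embed T1.C" by (simp add: inj_on_def embed_def)
  show "embed ` T1.C \<subseteq> acarrier Fus" using embed_in_fusion by auto
next
  fix x assume "x \<in> T1.C"
  show "embed x \<in> rad Fus \<longleftrightarrow> x \<in> rad T1"
    using ss_match_rad by (auto simp: rad_fusion embed_def)
next
  fix p assume "p \<in> acarrier Fus"
  then obtain x y where p: "p = (x, y)" "(x, y) \<in> fusion_carrier" by (cases p) simp
  then have "x \<in> T1.C" "y \<in> T2.C" by (simp_all add: fusion_carrier_def)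
  then show "\<exists>x\<in>T1.C. \<exists>r\<in>rad Fus. p = aadd Fus (embed x) r"
    using p fusion_decomp rad_proj_pair_in_rad by blast
qed

lemma fin_dim_fusion:
  assumes "fin_dim T1" and "fin_dim T2"
  shows "fin_dim Fus"
proof -
  interpret F: assoc_alg Fus by (rule assoc_alg.intro[OF algebra_fusion])
  have "lin_map T1 Fus embed"
    using rad_embedding_embed by (simp add: rad_embedding_def alg_hom_imp_lin_map)
  moreover have "lin_map T2 Fus (\<lambda>y. (T1.z, T2.rad_proj y))"
    by (simp add: lin_map_def T2.rad_proj_rad T2.rad_proj_add T2.rad_proj_sm)
  moreover have "embed ` T1.C \<subseteq> F.C" "(\<lambda>y. (T1.z, T2.rad_proj y)) ` T2.C \<subseteq> F.C"
    using embed_in_fusion rad_proj_pair_in_rad F.rad_subset by auto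
  moreover have "\<forall>p\<in>F.C. \<exists>x\<in>T1.C. \<exists>y\<in>T2.C. p = F.ad (embed x) (T1.z, T2.rad_proj y)"
    using fusion_decomp by (force simp: fusion_carrier_def)
  ultimately show ?thesis
    using F.fin_dim_sum_of_lin_images assms T1.is_algebra T2.is_algebra by blast
qed

lemma full_fusion:
  assumes "full T1" and "fin_dim T2"
  shows "full Fus"
proof -
  interpret rad_embedding_pair T1 Fus embed
    by (intro rad_embedding_pair.intro rad_embedding_pair_axioms.intro assoc_alg.intro
        T1.is_algebra algebra_fusion rad_embedding_embed)
  show ?thesis
    using assms full_image fin_dim_fusion by (simp add: full_def)
qed

lemma is_identity_fusion: "is_identity Fus f \<longleftrightarrow> is_identity T1 f \<and> is_identity T2 f"
  by (rule is_identity_subdirect[OF T1.is_algebra T2.is_algebra subdirect_fusion])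

end

theorem lemma2p9:
  fixes A :: "('f::field_char_0, 'a) alg"
    and P1 :: "nat \<Rightarrow> ('f, 'b) alg" and n1 k1 :: nat
    and P2 :: "nat \<Rightarrow> ('f, 'c) alg" and n2 k2 :: nat
    and Ts1 :: "'b set list" and Ts2 :: "'c set list"
    and \<phi> :: "'b \<Rightarrow> 'c"
    and P1' :: "nat \<Rightarrow> ('f, 'd) alg"
  assumes alg_closed: "\<forall>p :: 'f poly. degree p > 0 \<longrightarrow> (\<exists>x. poly p x = 0)"
    and A: "algebra A" "fin_dim A"
    and P1: "presentation A P1 n1" and k1: "k1 < n1"
    and P2: "presentation A P2 n2" and k2: "k2 < n2"
    and wm1: "wm_decomp (P1 k1) Ts1"
    and wm2: "wm_decomp (P2 k2) Ts2"
    and phi: "alg_iso (sub (P1 k1) (ss_part (P1 k1) Ts1)) (sub (P2 k2) (ss_part (P2 k2) Ts2)) \<phi>"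
    and repl: "\<exists>h. alg_iso (fusion (P1 k1) (P2 k2) (ss_part (P1 k1) Ts1) \<phi>) (P1' k1) h"
    and keep: "\<forall>i<n1. i \<noteq> k1 \<longrightarrow> (\<exists>h. alg_iso (P1 i) (P1' i) h)"
  shows "presentation A P1' n1"
proof -
  have full1: "full (P1 i)" if "i < n1" for i using P1 that by (simp add: presentation_def)
  then have alg1: "algebra (P1 i)" if "i < n1" for i using that by (simp add: full_def)
  have full2: "full (P2 k2)" using P2 k2 by (simp add: presentation_def)
  then have alg2: "algebra (P2 k2)" and fin2: "fin_dim (P2 k2)" by (simp_all add: full_def)
  interpret fusion_setting "P1 k1" "ss_part (P1 k1) Ts1" "P2 k2" "ss_part (P2 k2) Ts2" \<phi>
    using alg1[OF k1] alg2 wm1 wm2 phi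
    by (intro fusion_setting.intro fusion_setting_axioms.intro assoc_alg.rad_complement_ss_part
        assoc_alg.intro)
  obtain h where h: "alg_iso Fus (P1' k1) h" using repl fusion_eq by auto
  show ?thesis
  proof (rule presentation_replace_summand[OF P1 k1, where B = "P2 k2"])
    show "\<forall>i<n1. full (P1' i)"
      using full_alg_iso[OF full_fusion[OF full1[OF k1] fin2] h] full_alg_iso[OF full1] keep
      by metis
    show "is_identity (P1' i) f \<longleftrightarrow> is_identity (P1 i) f" if "i < n1" "i \<noteq> k1" for i f
      using keep that is_identity_alg_iso[OF alg1] by metis
    show "is_identity (P1' k1) f \<longleftrightarrow> is_identity (P1 k1) f \<and> is_identity (P2 k2) f" for f
      using is_identity_alg_iso[OF algebra_fusion h] is_identity_fusion by simp
    show "is_identity A f \<Longrightarrow> is_identity (P2 k2) f" for f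
      using is_identity_presentation[OF P2] k2 by auto
  qed
qed
end
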